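(* For a mutually orthogonal $d$-dimensional pure-state ensemble $\Omega = \{(1/k,|\psi_j\rangle)\}_{j=0}^{k-1}$, \[ \mathbf{C}_{\mathrm{MIO}}(\Omega) + \mathbf{S}(\Omega) \leq \log_2 d . \]
   Context: Fix the incoherent basis as the computational basis $\{|i\rangle\}$; incoherent states $\mathcal{I}$ are density matrices diagonal in this basis, and MIO (maximally incoherent operations) are the quantum channels mapping $\mathcal{I}$ into itself. The robustness of coherence is $C_R(\rho)=\min\{s\ge 0 : (\rho+s\tau)/(1+s)\in\mathcal{I} \text{ for some state } \tau\}$. For an ensemble $\Omega=\{(p_j,\rho_j)\}_{j=0}^{k-1}$ of states on a $d$-dimensional system $A$, the post-discrimination coherence is $\mathbf{C}_{\mathrm{MIO}}(\Omega)=\log_2(1+\eta)$ with $\eta=\max \sum_j p_j C_R(\sigma_j)$, the maximum taken over MIO channels $\mathcal{N}_{A\to BA'}$ ($\dim B=k$, $A'\cong A$) with $\sigma_j=\mathrm{tr}_B[\mathcal{N}(\rho_j)]$ and $\sum_j p_j \mathrm{tr}[\mathcal{N}(\rho_j)(|j\rangle\langle j|_B\otimes I_{A'})]=P_{\mathrm{suc}}(\Omega)$, where $P_{\mathrm{suc}}(\Omega)=\max_{\text{POVMs }\{E_j\}}\sum_j p_j\mathrm{tr}(E_j\rho_j)$ is the optimal (minimum-error) discrimination probability. The distinguishability is $\mathbf{S}(\Omega)=S(\hat\omega)$, the von Neumann entropy of the average state $\hat\omega=\sum_j p_j|\psi_j\rangle\langle\psi_j|$. *)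

theory Defs
  imports "Jordan_Normal_Form.Schur_Decomposition" "Jordan_Normal_Form.Char_Poly"
begin

definition mtrace :: "complex mat \<Rightarrow> complex" where
  "mtrace A = (\<Sum>i<dim_row A. A $$ (i, i))"

definition hermitian :: "complex mat \<Rightarrow> bool" where
  "hermitian A \<longleftrightarrow> A = mat_adjoint A"

definition psd :: "nat \<Rightarrow> complex mat \<Rightarrow> bool" where
  "psd n A \<longleftrightarrow> A \<in> carrier_mat n n \<and> hermitian A \<and>
     (\<forall>v \<in> carrier_vec n. Im (conjugate v \<bullet> (A *\<^sub>v v)) = 0 \<and> Re (conjugate v \<bullet> (A *\<^sub>v v)) \<ge> 0)"

definition density :: "nat \<Rightarrow> complex mat \<Rightarrow> bool" where
  "density n \<rho> \<longleftrightarrow> psd n \<rho> \<and> mtrace \<rho> = 1"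

definition incoherent :: "nat \<Rightarrow> complex mat \<Rightarrow> bool" where
  "incoherent n \<rho> \<longleftrightarrow> density n \<rho> \<and> diagonal_mat \<rho>"

definition proj :: "complex vec \<Rightarrow> complex mat" where
  "proj v = mat (dim_vec v) (dim_vec v) (\<lambda>(a, b). v $ a * cnj (v $ b))"

definition kraus_channel :: "nat \<Rightarrow> nat \<Rightarrow> complex mat list \<Rightarrow> bool" where
  "kraus_channel n m Ks \<longleftrightarrow> (\<forall>K \<in> set Ks. K \<in> carrier_mat m n) \<and>
     foldr (\<lambda>K acc. mat_adjoint K * K + acc) Ks (0\<^sub>m n n) = 1\<^sub>m n"

definition apply_channel :: "nat \<Rightarrow> complex mat list \<Rightarrow> complex mat \<Rightarrow> complex mat" where
  "apply_channel m Ks \<rho> = foldr (\<lambda>K acc. K * \<rho> * mat_adjoint K + acc) Ks (0\<^sub>m m m)"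

definition MIO :: "nat \<Rightarrow> nat \<Rightarrow> complex mat list \<Rightarrow> bool" where
  "MIO n m Ks \<longleftrightarrow> kraus_channel n m Ks \<and>
     (\<forall>\<rho>. incoherent n \<rho> \<longrightarrow> incoherent m (apply_channel m Ks \<rho>))"

text \<open>Bipartite system B (dim k) tensor A' (dim d): basis |j>|a> has index j*d + a.
  Partial trace over B, and tr[M (|j><j|_B \<otimes> I_A')].\<close>
definition ptrace_B :: "nat \<Rightarrow> nat \<Rightarrow> complex mat \<Rightarrow> complex mat" where
  "ptrace_B k d M = mat d d (\<lambda>(a, b). \<Sum>j<k. M $$ (j * d + a, j * d + b))"

definition block_weight :: "nat \<Rightarrow> nat \<Rightarrow> complex mat \<Rightarrow> complex" where
  "block_weight d j M = (\<Sum>a<d. M $$ (j * d + a, j * d + a))"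

definition robustness :: "nat \<Rightarrow> complex mat \<Rightarrow> real" where
  "robustness n \<rho> = Inf {s. s \<ge> 0 \<and> (\<exists>\<tau>. density n \<tau> \<and>
      incoherent n (complex_of_real (1 / (1 + s)) \<cdot>\<^sub>m (\<rho> + complex_of_real s \<cdot>\<^sub>m \<tau>)))}"

definition povm :: "nat \<Rightarrow> nat \<Rightarrow> (nat \<Rightarrow> complex mat) \<Rightarrow> bool" where
  "povm n k E \<longleftrightarrow> (\<forall>j<k. psd n (E j)) \<and> mat n n (\<lambda>(a, b). \<Sum>j<k. E j $$ (a, b)) = 1\<^sub>m n"

definition P_suc :: "nat \<Rightarrow> nat \<Rightarrow> (nat \<Rightarrow> real) \<Rightarrow> (nat \<Rightarrow> complex mat) \<Rightarrow> real" where
  "P_suc d k p \<rho> = Sup {(\<Sum>j<k. p j * Re (mtrace (E j * \<rho> j))) | E. povm d k E}"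

definition C_MIO :: "nat \<Rightarrow> nat \<Rightarrow> (nat \<Rightarrow> real) \<Rightarrow> (nat \<Rightarrow> complex mat) \<Rightarrow> real" where
  "C_MIO d k p \<rho> = log 2 (1 + Sup {(\<Sum>j<k. p j * robustness d (ptrace_B k d (apply_channel (k * d) Ks (\<rho> j))))
      | Ks. MIO d (k * d) Ks \<and>
            (\<Sum>j<k. p j * Re (block_weight d j (apply_channel (k * d) Ks (\<rho> j)))) = P_suc d k p \<rho>})"

definition ent_term :: "real \<Rightarrow> real" where
  "ent_term x = (if x \<le> 0 then 0 else - x * log 2 x)"

definition vn_entropy :: "complex mat \<Rightarrow> real" where
  "vn_entropy \<rho> = sum_mset (image_mset (\<lambda>x. ent_term (Re x)) (proots (char_poly \<rho>)))"

definition distinguishability :: "nat \<Rightarrow> nat \<Rightarrow> (nat \<Rightarrow> real) \<Rightarrow> (nat \<Rightarrow> complex vec) \<Rightarrow> real" where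
  "distinguishability d k p \<psi> = vn_entropy (mat d d (\<lambda>(a, b). \<Sum>j<k. complex_of_real (p j) * proj (\<psi> j) $$ (a, b)))"

end

theory Submission
  imports Defs
begin

text \<open>
  The ensemble of orthonormal states \<open>\<psi>\<^sub>j\<close> is perfectly distinguishable, so the success
  probability \<open>P\<^sub>s\<^sub>u\<^sub>c\<close> is 1. A MIO channel \<open>N\<close> that attains it must send \<open>\<psi>\<^sub>j\<close> into block \<open>j\<close>
  of \<open>B \<otimes> A'\<close>, so \<open>\<sigma>\<^sub>j\<close> is the \<open>j\<close>-th diagonal block of \<open>N(\<psi>\<^sub>j)\<close>. As \<open>N(I - \<psi>\<^sub>j\<psi>\<^sub>j\<^sup>\<dagger>) \<ge> 0\<close>,
  this block is dominated by the \<open>j\<close>-th block \<open>D\<^sub>j\<close> of \<open>N(I)\<close>, which is diagonal because \<open>N\<close>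
  is MIO; hence \<open>C\<^sub>R(\<sigma>\<^sub>j) \<le> tr D\<^sub>j - 1\<close>. Summing, \<open>tr N(I) = d\<close> bounds the average robustness
  by \<open>d/k - 1\<close>, i.e. \<open>C\<^sub>M\<^sub>I\<^sub>O \<le> log d - log k\<close>; a measure-and-prepare channel shows that the
  supremum in \<open>C\<^sub>M\<^sub>I\<^sub>O\<close> is over a nonempty set. Finally the average state is \<open>1/k\<close> times a
  projection of rank \<open>k\<close>, so its entropy is \<open>log k\<close>.
\<close>

section \<open>Quadratic forms and positive semidefinite matrices\<close>

lemma mat_adjoint_carrier: "A \<in> carrier_mat m n \<Longrightarrow> mat_adjoint A \<in> carrier_mat n m"
  unfolding mat_adjoint_def by auto

lemma mat_adjoint_index:
  "A \<in> carrier_mat m n \<Longrightarrow> i < n \<Longrightarrow> j < m \<Longrightarrow> mat_adjoint A $$ (i, j) = cnj (A $$ (j, i))"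
  unfolding mat_adjoint_def by (auto simp: mat_of_rows_index)

lemma mtrace_eq_sum: "A \<in> carrier_mat n n \<Longrightarrow> mtrace A = (\<Sum>i<n. A $$ (i, i))"
  unfolding mtrace_def by auto

lemma mtrace_minus:
  assumes "A \<in> carrier_mat n n" "B \<in> carrier_mat n n"
  shows "mtrace (A - B) = mtrace A - mtrace B"
  unfolding mtrace_eq_sum[OF minus_carrier_mat[OF assms(2)]] mtrace_eq_sum[OF assms(1)]
    mtrace_eq_sum[OF assms(2)]
  using assms by (simp add: sum_subtractf)

lemma mtrace_smult:
  assumes "A \<in> carrier_mat n n"
  shows "mtrace (x \<cdot>\<^sub>m A) = x * mtrace A"
  unfolding mtrace_eq_sum[OF smult_carrier_mat[OF assms]] mtrace_eq_sum[OF assms]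
  using assms by (simp add: sum_distrib_left)

lemma Re_cnj_mult_self_nonneg: "0 \<le> Re (cnj z * z)"
  by (simp add: mult.commute)

lemma sum_lessThan_two_points:
  fixes n r s :: nat
  assumes "r \<noteq> s" "r < n" "s < n" "\<And>a. a \<noteq> r \<Longrightarrow> a \<noteq> s \<Longrightarrow> f a = 0"
  shows "(\<Sum>a<n. f a) = f r + f s"
proof -
  have "(\<Sum>a<n. f a) = (\<Sum>a\<in>{r, s}. f a)"
    by (rule sum.mono_neutral_right) (use assms in auto)
  thus ?thesis using assms by simp
qed

lemma sum_rotate3: "(\<Sum>r\<in>R. \<Sum>s\<in>S. \<Sum>t\<in>T. f r s t) = (\<Sum>t\<in>T. \<Sum>r\<in>R. \<Sum>s\<in>S. f r s t)"
proof -
  have "(\<Sum>r\<in>R. \<Sum>s\<in>S. \<Sum>t\<in>T. f r s t) = (\<Sum>r\<in>R. \<Sum>t\<in>T. \<Sum>s\<in>S. f r s t)"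
    by (rule sum.cong[OF refl], rule sum.swap)
  also have "\<dots> = (\<Sum>t\<in>T. \<Sum>r\<in>R. \<Sum>s\<in>S. f r s t)" by (rule sum.swap)
  finally show ?thesis .
qed

lemma sum_swap_pairs:
  "(\<Sum>a\<in>A. \<Sum>b\<in>B. \<Sum>c\<in>C. \<Sum>d\<in>D. f a b c d) = (\<Sum>c\<in>C. \<Sum>d\<in>D. \<Sum>a\<in>A. \<Sum>b\<in>B. f a b c d)"
proof -
  have "(\<Sum>a\<in>A. \<Sum>b\<in>B. \<Sum>c\<in>C. \<Sum>d\<in>D. f a b c d) = (\<Sum>c\<in>C. \<Sum>a\<in>A. \<Sum>b\<in>B. \<Sum>d\<in>D. f a b c d)"
    by (rule sum_rotate3)
  also have "\<dots> = (\<Sum>c\<in>C. \<Sum>d\<in>D. \<Sum>a\<in>A. \<Sum>b\<in>B. f a b c d)"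
    by (rule sum.cong[OF refl], rule sum_rotate3)
  finally show ?thesis .
qed

text \<open>The vector is given as a function on indices, so no carrier conditions on it arise.\<close>

definition qform :: "nat \<Rightarrow> complex mat \<Rightarrow> (nat \<Rightarrow> complex) \<Rightarrow> complex" where
  "qform n A v = (\<Sum>a<n. \<Sum>b<n. cnj (v a) * A $$ (a, b) * v b)"

lemma scalar_prod_mult_mat_vec_eq_qform:
  assumes "A \<in> carrier_mat n n" "v \<in> carrier_vec n"
  shows "conjugate v \<bullet> (A *\<^sub>v v) = qform n A (\<lambda>i. v $ i)"
  using assms unfolding qform_def
  by (auto simp: scalar_prod_def mult_mat_vec_def row_def sum_distrib_left atLeast0LessThan
      mult.assoc intro!: sum.cong)

lemma qform_mat: "qform n (mat n n f) v = (\<Sum>a<n. \<Sum>b<n. cnj (v a) * f (a, b) * v b)"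
  unfolding qform_def by (intro sum.cong refl) auto

lemma qform_one_mat: "qform n (1\<^sub>m n) v = (\<Sum>a<n. cnj (v a) * v a)"
  unfolding qform_def by (simp add: if_distrib[of "\<lambda>x. _ * x"] if_distrib[of "\<lambda>x. x * _"] cong: if_cong)

lemma qform_add:
  assumes "A \<in> carrier_mat n n" "B \<in> carrier_mat n n"
  shows "qform n (A + B) v = qform n A v + qform n B v"
  unfolding qform_def using assms by (simp add: sum.distrib algebra_simps)

lemma qform_minus:
  assumes "A \<in> carrier_mat n n" "B \<in> carrier_mat n n"
  shows "qform n (A - B) v = qform n A v - qform n B v"
  unfolding qform_def using assms by (simp add: sum_subtractf algebra_simps)

lemma qform_indicator: "r < n \<Longrightarrow> qform n A (\<lambda>i. if i = r then 1 else 0) = A $$ (r, r)"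
  unfolding qform_def
  by (simp add: if_distrib[of cnj] if_distrib[of "\<lambda>x. _ * x"] if_distrib[of "\<lambda>x. x * _"] cong: if_cong)

lemma qform_two_points:
  assumes "r \<noteq> s" "r < n" "s < n"
  shows "qform n A (\<lambda>i. if i = r then x else if i = s then 1 else 0) =
    cnj x * x * A $$ (r, r) + cnj x * A $$ (r, s) + x * A $$ (s, r) + A $$ (s, s)"
proof -
  let ?v = "\<lambda>i. if i = r then x else if i = s then 1 else (0::complex)"
  have "(\<Sum>b<n. cnj (?v a) * A $$ (a, b) * ?v b) = cnj (?v a) * A $$ (a, r) * x + cnj (?v a) * A $$ (a, s)"
    for a by (subst sum_lessThan_two_points[OF assms]) (use assms in auto)
  hence "qform n A ?v = (\<Sum>a<n. cnj (?v a) * A $$ (a, r) * x + cnj (?v a) * A $$ (a, s))"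
    unfolding qform_def by simp
  also have "\<dots> = (cnj x * A $$ (r, r) * x + cnj x * A $$ (r, s)) + (A $$ (s, r) * x + A $$ (s, s))"
    by (subst sum_lessThan_two_points[OF assms]) (use assms in auto)
  finally show ?thesis by (simp add: algebra_simps)
qed

lemma hermitian_iff_index:
  assumes A: "A \<in> carrier_mat n n"
  shows "hermitian A \<longleftrightarrow> (\<forall>i<n. \<forall>j<n. A $$ (i, j) = cnj (A $$ (j, i)))"
proof -
  have "A = mat_adjoint A \<longleftrightarrow> (\<forall>i<n. \<forall>j<n. A $$ (i, j) = mat_adjoint A $$ (i, j))"
    using A mat_adjoint_carrier[OF A] by (metis carrier_matD(1) carrier_matD(2) eq_matI)
  thus ?thesis unfolding hermitian_def using mat_adjoint_index[OF A] by simp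
qed

lemma psd_iff_qform:
  "psd n A \<longleftrightarrow> A \<in> carrier_mat n n \<and> (\<forall>i<n. \<forall>j<n. A $$ (i, j) = cnj (A $$ (j, i))) \<and>
     (\<forall>v. Im (qform n A v) = 0 \<and> 0 \<le> Re (qform n A v))"
proof
  assume p: "psd n A"
  hence A: "A \<in> carrier_mat n n" and "hermitian A" unfolding psd_def by auto
  hence h: "\<forall>i<n. \<forall>j<n. A $$ (i, j) = cnj (A $$ (j, i))" using hermitian_iff_index by blast
  have q: "\<And>w. w \<in> carrier_vec n \<Longrightarrow>
      Im (conjugate w \<bullet> (A *\<^sub>v w)) = 0 \<and> Re (conjugate w \<bullet> (A *\<^sub>v w)) \<ge> 0"
    using p unfolding psd_def by blast
  have "Im (qform n A v) = 0 \<and> 0 \<le> Re (qform n A v)" for v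
  proof -
    have "qform n A v = conjugate (vec n v) \<bullet> (A *\<^sub>v vec n v)"
      using scalar_prod_mult_mat_vec_eq_qform[OF A vec_carrier, of v] unfolding qform_def by simp
    thus ?thesis using q[OF vec_carrier] by simp
  qed
  thus "A \<in> carrier_mat n n \<and> (\<forall>i<n. \<forall>j<n. A $$ (i, j) = cnj (A $$ (j, i))) \<and>
     (\<forall>v. Im (qform n A v) = 0 \<and> 0 \<le> Re (qform n A v))" using A h by blast
next
  assume r: "A \<in> carrier_mat n n \<and> (\<forall>i<n. \<forall>j<n. A $$ (i, j) = cnj (A $$ (j, i))) \<and>
     (\<forall>v. Im (qform n A v) = 0 \<and> 0 \<le> Re (qform n A v))"
  hence A: "A \<in> carrier_mat n n" by blast
  show "psd n A" unfolding psd_def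
  proof (intro conjI A ballI)
    show "hermitian A" using r hermitian_iff_index[OF A] by blast
    fix w :: "complex vec" assume w: "w \<in> carrier_vec n"
    show "Im (conjugate w \<bullet> (A *\<^sub>v w)) = 0" "Re (conjugate w \<bullet> (A *\<^sub>v w)) \<ge> 0"
      unfolding scalar_prod_mult_mat_vec_eq_qform[OF A w] using r by blast+
  qed
qed

lemma psd_carrier: "psd n A \<Longrightarrow> A \<in> carrier_mat n n"
  unfolding psd_def by blast

lemma psd_diag_real_nonneg:
  assumes "psd n A" "r < n"
  shows "complex_of_real (Re (A $$ (r, r))) = A $$ (r, r)" "0 \<le> Re (A $$ (r, r))"
proof -
  have "Im (qform n A (\<lambda>i. if i = r then 1 else 0)) = 0 \<and> 0 \<le> Re (qform n A (\<lambda>i. if i = r then 1 else 0))"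
    using assms(1) unfolding psd_iff_qform by blast
  thus "complex_of_real (Re (A $$ (r, r))) = A $$ (r, r)" "0 \<le> Re (A $$ (r, r))"
    unfolding qform_indicator[OF assms(2)] by (simp_all add: complex_eq_iff)
qed

lemma mtrace_psd_real:
  assumes "psd n A"
  shows "complex_of_real (Re (mtrace A)) = mtrace A"
  unfolding mtrace_eq_sum[OF psd_carrier[OF assms]] using psd_diag_real_nonneg(1)[OF assms] by simp

lemma Re_mtrace_psd_nonneg:
  assumes "psd n A"
  shows "0 \<le> Re (mtrace A)"
  unfolding mtrace_eq_sum[OF psd_carrier[OF assms]] using psd_diag_real_nonneg(2)[OF assms]
  by (auto intro: sum_nonneg)

text \<open>Testing with \<open>x e\<^sub>r + e\<^sub>s\<close> for \<open>x = -c A\<^sub>r\<^sub>s\<close> and large \<open>c\<close> makes the form negative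
  unless \<open>A\<^sub>r\<^sub>s = 0\<close>.\<close>

lemma psd_index_eq_0_if_diag_eq_0:
  assumes p: "psd n A" and r: "r < n" and s: "s < n" and z: "A $$ (r, r) = 0"
  shows "A $$ (r, s) = 0"
proof (rule ccontr)
  assume nz: "A $$ (r, s) \<noteq> 0"
  hence rs: "r \<noteq> s" using z by auto
  have h: "A $$ (s, r) = cnj (A $$ (r, s))" using p r s unfolding psd_iff_qform by blast
  have q: "0 \<le> Re (qform n A v)" for v using p unfolding psd_iff_qform by blast
  define w where "w = A $$ (r, s)"
  define c where "c = (Re (A $$ (s, s)) + 1) / (cmod w)\<^sup>2"
  define x where "x = - complex_of_real c * w"
  have cm: "cmod w > 0" using nz unfolding w_def by simp
  have ss: "0 \<le> Re (A $$ (s, s))" using psd_diag_real_nonneg(2)[OF p s] .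
  have wcw: "cnj w * w = complex_of_real ((cmod w)\<^sup>2)"
    by (metis complex_norm_square mult.commute of_real_power)
  have "qform n A (\<lambda>i. if i = r then x else if i = s then 1 else 0) = cnj x * w + x * cnj w + A $$ (s, s)"
    unfolding qform_two_points[OF rs r s] z h w_def by simp
  also have "\<dots> = - 2 * complex_of_real c * (cnj w * w) + A $$ (s, s)"
    unfolding x_def by (simp add: algebra_simps)
  finally have "Re (qform n A (\<lambda>i. if i = r then x else if i = s then 1 else 0))
      = - 2 * c * (cmod w)\<^sup>2 + Re (A $$ (s, s))"
    unfolding wcw by simp
  also have "\<dots> = - 2 * (Re (A $$ (s, s)) + 1) + Re (A $$ (s, s))"
    unfolding c_def using cm by simp
  finally show False using q[of "\<lambda>i. if i = r then x else if i = s then 1 else 0"] ss by simp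
qed

lemma psd_lincomb:
  assumes A: "psd n A" and B: "psd n B" and x: "x \<ge> 0" and y: "y \<ge> 0"
  shows "psd n (complex_of_real x \<cdot>\<^sub>m A + complex_of_real y \<cdot>\<^sub>m B)" (is "psd n ?C")
proof -
  have Ac: "A \<in> carrier_mat n n" and hA: "\<forall>i<n. \<forall>j<n. A $$ (i, j) = cnj (A $$ (j, i))"
    and qA: "\<And>v. Im (qform n A v) = 0 \<and> 0 \<le> Re (qform n A v)"
    using A unfolding psd_iff_qform by blast+
  have Bc: "B \<in> carrier_mat n n" and hB: "\<forall>i<n. \<forall>j<n. B $$ (i, j) = cnj (B $$ (j, i))"
    and qB: "\<And>v. Im (qform n B v) = 0 \<and> 0 \<le> Re (qform n B v)"
    using B unfolding psd_iff_qform by blast+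
  have C: "?C $$ (a, b) = complex_of_real x * A $$ (a, b) + complex_of_real y * B $$ (a, b)"
    if "a < n" "b < n" for a b using that Ac Bc by simp
  have "\<forall>i<n. \<forall>j<n. ?C $$ (i, j) = cnj (?C $$ (j, i))"
  proof (intro allI impI)
    fix i j assume ij: "i < n" "j < n"
    show "?C $$ (i, j) = cnj (?C $$ (j, i))"
      unfolding C[OF ij] C[OF ij(2,1)] using hA[rule_format, OF ij] hB[rule_format, OF ij] by simp
  qed
  moreover have "Im (qform n ?C v) = 0 \<and> 0 \<le> Re (qform n ?C v)" for v
  proof -
    have "qform n ?C v = complex_of_real x * qform n A v + complex_of_real y * qform n B v"
      unfolding qform_def using C by (simp add: sum_distrib_left sum.distrib algebra_simps)
    thus ?thesis using qA[of v] qB[of v] x y by simp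
  qed
  moreover have "?C \<in> carrier_mat n n" using Ac Bc by simp
  ultimately show ?thesis unfolding psd_iff_qform by blast
qed

lemma psd_smult:
  assumes "psd n A" "0 \<le> x"
  shows "psd n (complex_of_real x \<cdot>\<^sub>m A)"
proof -
  have "complex_of_real x \<cdot>\<^sub>m A + complex_of_real 0 \<cdot>\<^sub>m A = complex_of_real x \<cdot>\<^sub>m A"
    using psd_carrier[OF assms(1)] by (intro eq_matI) auto
  thus ?thesis using psd_lincomb[OF assms(1,1,2), of 0] by simp
qed

lemma psd_add:
  assumes "psd n A" "psd n B"
  shows "psd n (A + B)"
proof -
  have "complex_of_real 1 \<cdot>\<^sub>m A + complex_of_real 1 \<cdot>\<^sub>m B = A + B"
    using psd_carrier[OF assms(1)] psd_carrier[OF assms(2)] by (intro eq_matI) auto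
  thus ?thesis using psd_lincomb[OF assms, of 1 1] by simp
qed

lemma psd_one_mat: "psd n (1\<^sub>m n)"
proof -
  have "Im (qform n (1\<^sub>m n) v) = 0" for v
    unfolding qform_one_mat Im_sum by (simp add: mult.commute)
  moreover have "0 \<le> Re (qform n (1\<^sub>m n) v)" for v
    unfolding qform_one_mat Re_sum by (intro sum_nonneg) (simp only: Re_cnj_mult_self_nonneg)
  moreover have "\<forall>i<n. \<forall>j<n. 1\<^sub>m n $$ (i, j) = cnj (1\<^sub>m n $$ (j, i))"
    by simp
  ultimately show ?thesis unfolding psd_iff_qform using one_carrier_mat by blast
qed

lemma psd_zero_mat: "psd n (0\<^sub>m n n)"
proof -
  have "complex_of_real 0 \<cdot>\<^sub>m 1\<^sub>m n = (0\<^sub>m n n :: complex mat)"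
    by (intro eq_matI) auto
  thus ?thesis using psd_smult[OF psd_one_mat[of n], of 0] by simp
qed

section \<open>Measurements and Kraus channels\<close>

lemma povm_index:
  assumes "povm n k E" "a < n" "b < n"
  shows "(\<Sum>i<k. E i $$ (a, b)) = (if a = b then 1 else 0)"
proof -
  have "mat n n (\<lambda>(a, b). \<Sum>j<k. E j $$ (a, b)) $$ (a, b) = (1\<^sub>m n :: complex mat) $$ (a, b)"
    using assms(1) unfolding povm_def by simp
  thus ?thesis using assms(2,3) by simp
qed

lemma sum_qform_povm:
  assumes "povm n k E"
  shows "(\<Sum>i<k. qform n (E i) v) = (\<Sum>a<n. cnj (v a) * v a)"
proof -
  have "(\<Sum>i<k. qform n (E i) v) = (\<Sum>a<n. \<Sum>b<n. cnj (v a) * (\<Sum>i<k. E i $$ (a, b)) * v b)"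
    unfolding qform_def by (rule trans[OF sum_rotate3[symmetric]]) (simp add: sum_distrib_left sum_distrib_right)
  also have "\<dots> = (\<Sum>a<n. \<Sum>b<n. if a = b then cnj (v a) * v b else 0)"
    using povm_index[OF assms] by (intro sum.cong refl) simp
  finally show ?thesis by simp
qed

lemma mult_mult_adjoint_index:
  assumes K: "K \<in> carrier_mat m n" and \<rho>: "\<rho> \<in> carrier_mat n n" and "r < m" "s < m"
  shows "(K * \<rho> * mat_adjoint K) $$ (r, s) =
    (\<Sum>c<n. \<Sum>c'<n. K $$ (r, c) * \<rho> $$ (c, c') * cnj (K $$ (s, c')))"
proof -
  have "(K * \<rho> * mat_adjoint K) $$ (r, s) = (\<Sum>c'<n. (\<Sum>c<n. K $$ (r, c) * \<rho> $$ (c, c')) * cnj (K $$ (s, c')))"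
    using K \<rho> mat_adjoint_carrier[OF K] mat_adjoint_index[OF K] assms(3,4)
    by (auto simp: times_mat_def scalar_prod_def row_def col_def atLeast0LessThan intro!: sum.cong)
  also have "\<dots> = (\<Sum>c<n. \<Sum>c'<n. K $$ (r, c) * \<rho> $$ (c, c') * cnj (K $$ (s, c')))"
    by (subst sum.swap) (simp add: sum_distrib_right)
  finally show ?thesis .
qed

lemma qform_mult_mult_adjoint:
  assumes K: "K \<in> carrier_mat m n" and \<rho>: "\<rho> \<in> carrier_mat n n"
  shows "qform m (K * \<rho> * mat_adjoint K) v = qform n \<rho> (\<lambda>c. \<Sum>r<m. cnj (K $$ (r, c)) * v r)"
proof -
  have "qform m (K * \<rho> * mat_adjoint K) v =
      (\<Sum>r<m. \<Sum>s<m. \<Sum>c<n. \<Sum>c'<n. cnj (v r) * K $$ (r, c) * \<rho> $$ (c, c') * cnj (K $$ (s, c')) * v s)"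
    unfolding qform_def using mult_mult_adjoint_index[OF K \<rho>]
    by (simp add: sum_distrib_left sum_distrib_right mult_ac)
  also have "\<dots> = (\<Sum>c<n. \<Sum>c'<n. \<Sum>r<m. \<Sum>s<m. cnj (v r) * K $$ (r, c) * \<rho> $$ (c, c') * cnj (K $$ (s, c')) * v s)"
    by (rule sum_swap_pairs)
  also have "\<dots> = qform n \<rho> (\<lambda>c. \<Sum>r<m. cnj (K $$ (r, c)) * v r)"
    unfolding qform_def by (simp add: cnj_sum sum_distrib_left sum_distrib_right mult_ac)
  finally show ?thesis .
qed

lemma psd_mult_mult_adjoint:
  assumes \<rho>: "psd n \<rho>" and K: "K \<in> carrier_mat m n"
  shows "psd m (K * \<rho> * mat_adjoint K)"
proof -
  have \<rho>c: "\<rho> \<in> carrier_mat n n" and h: "\<forall>i<n. \<forall>j<n. \<rho> $$ (i, j) = cnj (\<rho> $$ (j, i))"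
    and q: "\<And>v. Im (qform n \<rho> v) = 0 \<and> 0 \<le> Re (qform n \<rho> v)"
    using \<rho> unfolding psd_iff_qform by blast+
  have "\<forall>r<m. \<forall>s<m. (K * \<rho> * mat_adjoint K) $$ (r, s) = cnj ((K * \<rho> * mat_adjoint K) $$ (s, r))"
  proof (intro allI impI)
    fix r s assume rs: "r < m" "s < m"
    have "cnj ((K * \<rho> * mat_adjoint K) $$ (s, r)) =
        (\<Sum>c<n. \<Sum>c'<n. cnj (K $$ (s, c)) * \<rho> $$ (c', c) * K $$ (r, c'))"
      unfolding mult_mult_adjoint_index[OF K \<rho>c rs(2,1)] cnj_sum
    proof (intro sum.cong refl)
      fix c c' assume "c \<in> {..<n}" "c' \<in> {..<n}"
      hence "cnj (\<rho> $$ (c, c')) = \<rho> $$ (c', c)" using h[rule_format, of c' c] by simp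
      thus "cnj (K $$ (s, c) * \<rho> $$ (c, c') * cnj (K $$ (r, c'))) = cnj (K $$ (s, c)) * \<rho> $$ (c', c) * K $$ (r, c')"
        by simp
    qed
    also have "\<dots> = (K * \<rho> * mat_adjoint K) $$ (r, s)"
      unfolding mult_mult_adjoint_index[OF K \<rho>c rs] by (subst sum.swap) (simp add: mult_ac)
    finally show "(K * \<rho> * mat_adjoint K) $$ (r, s) = cnj ((K * \<rho> * mat_adjoint K) $$ (s, r))" ..
  qed
  moreover have "K * \<rho> * mat_adjoint K \<in> carrier_mat m m"
    using K \<rho>c mat_adjoint_carrier[OF K] by simp
  ultimately show ?thesis unfolding psd_iff_qform qform_mult_mult_adjoint[OF K \<rho>c] using q by blast
qed

lemma apply_channel_Nil [simp]: "apply_channel m [] \<rho> = 0\<^sub>m m m"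
  unfolding apply_channel_def by simp

lemma apply_channel_Cons [simp]:
  "apply_channel m (K # Ks) \<rho> = K * \<rho> * mat_adjoint K + apply_channel m Ks \<rho>"
  unfolding apply_channel_def by simp

lemma apply_channel_carrier:
  assumes "\<forall>K\<in>set Ks. K \<in> carrier_mat m n" "\<rho> \<in> carrier_mat n n"
  shows "apply_channel m Ks \<rho> \<in> carrier_mat m m"
  using assms(1) by (induction Ks) (use assms(2) mat_adjoint_carrier in auto)

lemma apply_channel_index:
  assumes "\<forall>K\<in>set Ks. K \<in> carrier_mat m n" "\<rho> \<in> carrier_mat n n" "r < m" "s < m"
  shows "apply_channel m Ks \<rho> $$ (r, s) =
    (\<Sum>K\<leftarrow>Ks. \<Sum>c<n. \<Sum>c'<n. K $$ (r, c) * \<rho> $$ (c, c') * cnj (K $$ (s, c')))"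
  using assms(1)
proof (induction Ks)
  case (Cons K Ks)
  have K: "K \<in> carrier_mat m n" using Cons.prems by simp
  have "apply_channel m Ks \<rho> \<in> carrier_mat m m"
    using apply_channel_carrier[OF _ assms(2)] Cons.prems by simp
  hence "apply_channel m (K # Ks) \<rho> $$ (r, s) = (K * \<rho> * mat_adjoint K) $$ (r, s) + apply_channel m Ks \<rho> $$ (r, s)"
    using assms(3,4) by simp
  thus ?case using Cons mult_mult_adjoint_index[OF K assms(2-4)] by simp
qed (use assms(3,4) in simp)

lemma psd_apply_channel:
  assumes "\<forall>K\<in>set Ks. K \<in> carrier_mat m n" "psd n \<rho>"
  shows "psd m (apply_channel m Ks \<rho>)"
  using assms(1)
proof (induction Ks)
  case (Cons K Ks)
  thus ?case using psd_add[OF psd_mult_mult_adjoint[OF assms(2)]] by simp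
qed (simp add: psd_zero_mat)

lemma adjoint_mult_index:
  assumes K: "K \<in> carrier_mat m n" and "c < n" "c' < n"
  shows "(mat_adjoint K * K) $$ (c, c') = (\<Sum>r<m. cnj (K $$ (r, c)) * K $$ (r, c'))"
  using K mat_adjoint_carrier[OF K] mat_adjoint_index[OF K] assms(2,3)
  by (auto simp: times_mat_def scalar_prod_def row_def col_def atLeast0LessThan intro!: sum.cong)

lemma kraus_sum_carrier:
  assumes "\<forall>K\<in>set Ks. K \<in> carrier_mat m n"
  shows "foldr (\<lambda>K acc. mat_adjoint K * K + acc) Ks (0\<^sub>m n n) \<in> carrier_mat n n"
  using assms
proof (induction Ks)
  case (Cons K Ks)
  have K: "K \<in> carrier_mat m n" and Ks: "\<forall>K\<in>set Ks. K \<in> carrier_mat m n" using Cons.prems by auto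
  have "foldr (\<lambda>K acc. mat_adjoint K * K + acc) Ks (0\<^sub>m n n) \<in> carrier_mat n n" using Cons.IH[OF Ks] .
  thus ?case using mat_adjoint_carrier[OF K] K by simp
qed simp

lemma kraus_sum_index:
  assumes "\<forall>K\<in>set Ks. K \<in> carrier_mat m n" "c < n" "c' < n"
  shows "foldr (\<lambda>K acc. mat_adjoint K * K + acc) Ks (0\<^sub>m n n) $$ (c, c') =
    (\<Sum>K\<leftarrow>Ks. \<Sum>r<m. cnj (K $$ (r, c)) * K $$ (r, c'))"
  using assms(1)
proof (induction Ks)
  case (Cons K Ks)
  have K: "K \<in> carrier_mat m n" using Cons.prems by simp
  have "foldr (\<lambda>K acc. mat_adjoint K * K + acc) Ks (0\<^sub>m n n) \<in> carrier_mat n n"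
    using kraus_sum_carrier[of Ks m n] Cons.prems by simp
  thus ?case using Cons adjoint_mult_index[OF K assms(2,3)] assms(2,3) by simp
qed (use assms(2,3) in simp)

lemma kraus_channel_index:
  assumes "kraus_channel n m Ks" "c < n" "c' < n"
  shows "(\<Sum>K\<leftarrow>Ks. \<Sum>r<m. cnj (K $$ (r, c)) * K $$ (r, c')) = (if c = c' then 1 else 0)"
  using assms kraus_sum_index[of Ks m n c c'] unfolding kraus_channel_def by simp

lemma mtrace_apply_channel:
  assumes kc: "kraus_channel n m Ks" and \<rho>: "\<rho> \<in> carrier_mat n n"
  shows "mtrace (apply_channel m Ks \<rho>) = mtrace \<rho>"
proof -
  have Ks: "\<forall>K\<in>set Ks. K \<in> carrier_mat m n" using kc unfolding kraus_channel_def by auto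
  let ?K = "\<lambda>t r c. (Ks ! t) $$ (r, c)"
  let ?L = "length Ks"
  have idx: "(\<Sum>K\<leftarrow>Ks. f K) = (\<Sum>t<?L. f (Ks ! t))" for f :: "complex mat \<Rightarrow> complex"
    by (simp add: sum_list_sum_nth atLeast0LessThan)
  have kr: "(\<Sum>t<?L. \<Sum>r<m. cnj (?K t r c) * ?K t r c') = (if c = c' then 1 else 0)"
    if "c < n" "c' < n" for c c'
    using kraus_channel_index[OF kc that] unfolding idx .
  have "mtrace (apply_channel m Ks \<rho>) =
      (\<Sum>r<m. \<Sum>t<?L. \<Sum>c<n. \<Sum>c'<n. ?K t r c * \<rho> $$ (c, c') * cnj (?K t r c'))"
    unfolding mtrace_eq_sum[OF apply_channel_carrier[OF Ks \<rho>]] using apply_channel_index[OF Ks \<rho>]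
    by (simp add: idx)
  also have "\<dots> = (\<Sum>t<?L. \<Sum>r<m. \<Sum>c<n. \<Sum>c'<n. ?K t r c * \<rho> $$ (c, c') * cnj (?K t r c'))"
    by (rule sum.swap)
  also have "\<dots> = (\<Sum>c<n. \<Sum>c'<n. \<Sum>t<?L. \<Sum>r<m. ?K t r c * \<rho> $$ (c, c') * cnj (?K t r c'))"
    by (rule sum_swap_pairs)
  also have "\<dots> = (\<Sum>c<n. \<Sum>c'<n. \<rho> $$ (c, c') * (\<Sum>t<?L. \<Sum>r<m. cnj (?K t r c') * ?K t r c))"
    by (simp add: sum_distrib_left mult_ac)
  also have "\<dots> = (\<Sum>c<n. \<Sum>c'<n. if c = c' then \<rho> $$ (c, c') else 0)"
    using kr by (intro sum.cong refl) auto
  also have "\<dots> = mtrace \<rho>"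
    unfolding mtrace_eq_sum[OF \<rho>] by simp
  finally show ?thesis .
qed

lemma apply_channel_smult:
  assumes Ks: "\<forall>K\<in>set Ks. K \<in> carrier_mat m n" and \<rho>: "\<rho> \<in> carrier_mat n n"
  shows "apply_channel m Ks (x \<cdot>\<^sub>m \<rho>) = x \<cdot>\<^sub>m apply_channel m Ks \<rho>"
proof (rule eq_matI)
  fix r s assume "r < dim_row (x \<cdot>\<^sub>m apply_channel m Ks \<rho>)" "s < dim_col (x \<cdot>\<^sub>m apply_channel m Ks \<rho>)"
  hence rs: "r < m" "s < m" using apply_channel_carrier[OF Ks \<rho>] by auto
  have "(\<Sum>c<n. \<Sum>c'<n. K $$ (r, c) * (x \<cdot>\<^sub>m \<rho>) $$ (c, c') * cnj (K $$ (s, c'))) =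
      x * (\<Sum>c<n. \<Sum>c'<n. K $$ (r, c) * \<rho> $$ (c, c') * cnj (K $$ (s, c')))" for K
    unfolding sum_distrib_left using \<rho> by (intro sum.cong refl) (simp add: mult_ac)
  thus "apply_channel m Ks (x \<cdot>\<^sub>m \<rho>) $$ (r, s) = (x \<cdot>\<^sub>m apply_channel m Ks \<rho>) $$ (r, s)"
    using apply_channel_index[OF Ks _ rs] apply_channel_carrier[OF Ks \<rho>] \<rho> rs
    by (simp add: sum_list_const_mult)
qed (use apply_channel_carrier[OF Ks \<rho>] apply_channel_carrier[OF Ks smult_carrier_mat[OF \<rho>]] in auto)

lemma apply_channel_minus:
  assumes Ks: "\<forall>K\<in>set Ks. K \<in> carrier_mat m n"
    and A: "A \<in> carrier_mat n n" and B: "B \<in> carrier_mat n n"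
  shows "apply_channel m Ks (A - B) = apply_channel m Ks A - apply_channel m Ks B"
proof (rule eq_matI)
  fix r s assume "r < dim_row (apply_channel m Ks A - apply_channel m Ks B)"
    "s < dim_col (apply_channel m Ks A - apply_channel m Ks B)"
  hence rs: "r < m" "s < m" using apply_channel_carrier[OF Ks B] by auto
  have split: "(\<Sum>c<n. \<Sum>c'<n. K $$ (r, c) * (A - B) $$ (c, c') * cnj (K $$ (s, c'))) =
      (\<Sum>c<n. \<Sum>c'<n. K $$ (r, c) * A $$ (c, c') * cnj (K $$ (s, c'))) -
      (\<Sum>c<n. \<Sum>c'<n. K $$ (r, c) * B $$ (c, c') * cnj (K $$ (s, c')))" for K
    unfolding sum_subtractf[symmetric] using A B by (intro sum.cong refl) (simp add: algebra_simps)
  have "apply_channel m Ks (A - B) $$ (r, s) = apply_channel m Ks A $$ (r, s) - apply_channel m Ks B $$ (r, s)"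
    unfolding apply_channel_index[OF Ks minus_carrier_mat[OF B] rs] apply_channel_index[OF Ks A rs]
      apply_channel_index[OF Ks B rs] split sum_list_subtractf ..
  thus "apply_channel m Ks (A - B) $$ (r, s) = (apply_channel m Ks A - apply_channel m Ks B) $$ (r, s)"
    using apply_channel_carrier[OF Ks B] rs by simp
qed (use apply_channel_carrier[OF Ks B] apply_channel_carrier[OF Ks minus_carrier_mat[OF B]] in auto)

lemma incoherent_maximally_mixed:
  assumes "0 < n"
  shows "incoherent n (complex_of_real (1 / real n) \<cdot>\<^sub>m 1\<^sub>m n)"
proof -
  let ?M = "complex_of_real (1 / real n) \<cdot>\<^sub>m (1\<^sub>m n :: complex mat)"
  have "mtrace ?M = (\<Sum>a<n. ?M $$ (a, a))"
    by (rule mtrace_eq_sum) simp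
  also have "\<dots> = (\<Sum>a<n. complex_of_real (1 / real n))"
    by simp
  also have "\<dots> = 1" using assms by simp
  finally show ?thesis unfolding incoherent_def density_def diagonal_mat_def
    using psd_smult[OF psd_one_mat, of "1 / real n"] by simp
qed

lemma diagonal_apply_channel_one_mat:
  assumes mio: "MIO n m Ks" and n: "0 < n"
  shows "diagonal_mat (apply_channel m Ks (1\<^sub>m n))"
proof -
  have Ks: "\<forall>K\<in>set Ks. K \<in> carrier_mat m n" using mio unfolding MIO_def kraus_channel_def by blast
  define Z where "Z = apply_channel m Ks (complex_of_real (1 / real n) \<cdot>\<^sub>m 1\<^sub>m n)"
  have "diagonal_mat Z"
    using mio incoherent_maximally_mixed[OF n] unfolding Z_def MIO_def incoherent_def by blast
  moreover have "1\<^sub>m n = complex_of_real (real n) \<cdot>\<^sub>m (complex_of_real (1 / real n) \<cdot>\<^sub>m 1\<^sub>m n)"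
    using n by (intro eq_matI) auto
  hence "apply_channel m Ks (1\<^sub>m n) = complex_of_real (real n) \<cdot>\<^sub>m Z"
    unfolding Z_def by (metis apply_channel_smult[OF Ks] one_carrier_mat smult_carrier_mat)
  ultimately show ?thesis unfolding diagonal_mat_def by simp
qed

text \<open>A Kraus operator with a single nonzero row \<open>r\<^sub>0\<close> contributes to the output only at
  \<open>(r\<^sub>0, r\<^sub>0)\<close>, so such channels output diagonal matrices.\<close>

lemma MIO_if_single_row_kraus:
  assumes kc: "kraus_channel n m Ks"
    and rows: "\<forall>K\<in>set Ks. \<exists>r\<^sub>0. \<forall>r<m. \<forall>c<n. r \<noteq> r\<^sub>0 \<longrightarrow> K $$ (r, c) = 0"
  shows "MIO n m Ks"
  unfolding MIO_def
proof (intro conjI allI impI kc)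
  have Ks: "\<forall>K\<in>set Ks. K \<in> carrier_mat m n" using kc unfolding kraus_channel_def by blast
  fix \<rho> assume "incoherent n \<rho>"
  hence \<rho>: "psd n \<rho>" and tr: "mtrace \<rho> = 1" unfolding incoherent_def density_def by blast+
  have \<rho>c: "\<rho> \<in> carrier_mat n n" using psd_carrier[OF \<rho>] .
  let ?N = "apply_channel m Ks \<rho>"
  have Nc: "?N \<in> carrier_mat m m" by (rule apply_channel_carrier[OF Ks \<rho>c])
  have "?N $$ (r, s) = 0" if rs: "r < m" "s < m" "r \<noteq> s" for r s
  proof -
    have "(\<Sum>c<n. \<Sum>c'<n. K $$ (r, c) * \<rho> $$ (c, c') * cnj (K $$ (s, c'))) = 0" if "K \<in> set Ks" for K
    proof -
      obtain r\<^sub>0 where "\<forall>r<m. \<forall>c<n. r \<noteq> r\<^sub>0 \<longrightarrow> K $$ (r, c) = 0" using rows \<open>K \<in> set Ks\<close> by blast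
      hence "K $$ (r, c) * \<rho> $$ (c, c') * cnj (K $$ (s, c')) = 0" if "c < n" "c' < n" for c c'
        using that rs by (cases "r = r\<^sub>0") auto
      thus ?thesis by (auto intro!: sum.neutral)
    qed
    hence "(\<Sum>K\<leftarrow>Ks. \<Sum>c<n. \<Sum>c'<n. K $$ (r, c) * \<rho> $$ (c, c') * cnj (K $$ (s, c'))) = (\<Sum>K\<leftarrow>Ks. 0)"
      by (intro arg_cong[where f = sum_list] map_cong) auto
    thus ?thesis unfolding apply_channel_index[OF Ks \<rho>c rs(1,2)] by simp
  qed
  hence "diagonal_mat ?N" using Nc unfolding diagonal_mat_def by auto
  thus "incoherent m ?N"
    unfolding incoherent_def density_def
    using psd_apply_channel[OF Ks \<rho>] mtrace_apply_channel[OF kc \<rho>c] tr by simp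
qed

section \<open>Diagonal blocks and robustness of coherence\<close>

definition diag_block :: "nat \<Rightarrow> nat \<Rightarrow> complex mat \<Rightarrow> complex mat" where
  "diag_block d j A = mat d d (\<lambda>(a, b). A $$ (j * d + a, j * d + b))"

lemma block_end_le: "j < k \<Longrightarrow> j * d + d \<le> k * (d::nat)"
  by (metis Suc_leI add.commute mult_Suc mult_le_mono1)

lemma block_index_less: "j < k \<Longrightarrow> a < d \<Longrightarrow> j * d + a < k * (d::nat)"
  using block_end_le[of j k d] by linarith

lemma block_index_outside:
  assumes "i \<noteq> j" "a < (d::nat)"
  shows "\<not> (j * d \<le> i * d + a \<and> i * d + a < j * d + d)"
proof
  assume "j * d \<le> i * d + a \<and> i * d + a < j * d + d"
  hence "j * d < (i + 1) * d" "i * d < (j + 1) * d" using assms(2) by auto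
  hence "j < i + 1" "i < j + 1" using mult_less_cancel2 by blast+
  thus False using assms(1) by simp
qed

lemma sum_block_interval:
  fixes g :: "nat \<Rightarrow> 'a::comm_monoid_add"
  shows "sum g {j * d..<j * d + d} = (\<Sum>a<d. g (j * d + a))"
  using sum.shift_bounds_nat_ivl[of g 0 "j * d" d] by (simp add: atLeast0LessThan add.commute)

lemma sum_blocks:
  fixes g :: "nat \<Rightarrow> 'a::comm_monoid_add"
  shows "(\<Sum>j<k. \<Sum>a<d. g (j * d + a)) = (\<Sum>i<k * d. g i)"
  using sum.nat_group[of g d k] by (simp add: sum_block_interval mult.commute)

lemma sum_eq_block_if_zero_outside:
  fixes g :: "nat \<Rightarrow> 'a::comm_monoid_add"
  assumes j: "j < k" and z: "\<And>i. i < k * d \<Longrightarrow> \<not> (j * d \<le> i \<and> i < j * d + d) \<Longrightarrow> g i = 0"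
  shows "(\<Sum>i<k * d. g i) = (\<Sum>a<d. g (j * d + a))"
proof -
  have "(\<Sum>i<k * d. g i) = sum g {j * d..<j * d + d}"
    by (rule sum.mono_neutral_right) (use block_end_le[OF j, of d] z in auto)
  thus ?thesis unfolding sum_block_interval .
qed

lemma diag_block_carrier [simp]: "diag_block d j A \<in> carrier_mat d d"
  unfolding diag_block_def by simp

lemma diag_block_index [simp]: "a < d \<Longrightarrow> b < d \<Longrightarrow> diag_block d j A $$ (a, b) = A $$ (j * d + a, j * d + b)"
  unfolding diag_block_def by simp

lemma diag_block_minus:
  assumes "A \<in> carrier_mat (k * d) (k * d)" "B \<in> carrier_mat (k * d) (k * d)" "j < k"
  shows "diag_block d j (A - B) = diag_block d j A - diag_block d j B"
  using assms block_index_less[OF assms(3), of _ d] by (intro eq_matI) (auto simp: diag_block_def)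

lemma block_weight_eq_mtrace_diag_block: "block_weight d j A = mtrace (diag_block d j A)"
  unfolding block_weight_def mtrace_eq_sum[OF diag_block_carrier] by simp

lemma sum_block_weight:
  assumes "X \<in> carrier_mat (k * d) (k * d)"
  shows "(\<Sum>j<k. block_weight d j X) = mtrace X"
  unfolding block_weight_def mtrace_eq_sum[OF assms] by (rule sum_blocks)

text \<open>The test vector is extended by zero outside block \<open>j\<close>.\<close>

lemma psd_diag_block:
  assumes A: "psd (k * d) A" and j: "j < k"
  shows "psd d (diag_block d j A)"
proof -
  let ?B = "diag_block d j A"
  have hA: "\<forall>i<k * d. \<forall>i'<k * d. A $$ (i, i') = cnj (A $$ (i', i))"
    and qA: "\<And>u. Im (qform (k * d) A u) = 0 \<and> 0 \<le> Re (qform (k * d) A u)"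
    using A unfolding psd_iff_qform by blast+
  have "\<forall>a<d. \<forall>b<d. ?B $$ (a, b) = cnj (?B $$ (b, a))"
  proof (intro allI impI)
    fix a b assume ab: "a < d" "b < d"
    show "?B $$ (a, b) = cnj (?B $$ (b, a))"
      using ab hA[rule_format, OF block_index_less[OF j ab(1)] block_index_less[OF j ab(2)]] by simp
  qed
  moreover have "Im (qform d ?B v) = 0 \<and> 0 \<le> Re (qform d ?B v)" for v
  proof -
    define u where "u i = (if j * d \<le> i \<and> i < j * d + d then v (i - j * d) else 0)" for i
    have inner: "(\<Sum>i'<k * d. cnj (u i) * A $$ (i, i') * u i') = (\<Sum>b<d. cnj (u i) * A $$ (i, j * d + b) * v b)" for i
      by (subst sum_eq_block_if_zero_outside[OF j]) (auto simp: u_def)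
    have "qform (k * d) A u = (\<Sum>i<k * d. \<Sum>b<d. cnj (u i) * A $$ (i, j * d + b) * v b)"
      unfolding qform_def inner ..
    also have "\<dots> = (\<Sum>a<d. \<Sum>b<d. cnj (u (j * d + a)) * A $$ (j * d + a, j * d + b) * v b)"
      by (subst sum_eq_block_if_zero_outside[OF j]) (auto simp: u_def)
    also have "\<dots> = qform d ?B v"
      unfolding qform_def by (intro sum.cong refl) (auto simp: u_def)
    finally show ?thesis using qA[of u] by simp
  qed
  ultimately show ?thesis unfolding psd_iff_qform using diag_block_carrier by blast
qed

lemma mtrace_split_block:
  assumes X: "X \<in> carrier_mat (k * d) (k * d)" and j: "j < k"
  shows "mtrace X = block_weight d j X + (\<Sum>r\<in>{..<k * d} - {j * d..<j * d + d}. X $$ (r, r))"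
proof -
  have "{j * d..<j * d + d} \<subseteq> {..<k * d}" using block_end_le[OF j, of d] by auto
  moreover have "block_weight d j X = (\<Sum>r\<in>{j * d..<j * d + d}. X $$ (r, r))"
    unfolding block_weight_def sum_block_interval ..
  ultimately show ?thesis unfolding mtrace_eq_sum[OF X] by (simp add: sum.subset_diff)
qed

lemma outside_block_nonneg:
  assumes "psd (k * d) X"
  shows "0 \<le> (\<Sum>r\<in>{..<k * d} - {j * d..<j * d + d}. Re (X $$ (r, r)))"
  using psd_diag_real_nonneg(2)[OF assms] by (intro sum_nonneg) auto

lemma block_weight_le_mtrace:
  assumes X: "psd (k * d) X" and j: "j < k"
  shows "Re (block_weight d j X) \<le> Re (mtrace X)"
  using mtrace_split_block[OF psd_carrier[OF X] j] outside_block_nonneg[OF X, of j]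
  by simp

text \<open>The diagonal entries outside block \<open>j\<close> are nonnegative with sum \<open>0\<close>, and a zero diagonal
  entry of a psd matrix forces its row to vanish.\<close>

lemma psd_zero_outside_block:
  assumes X: "psd (k * d) X" and j: "j < k" and full: "Re (block_weight d j X) = Re (mtrace X)"
    and r: "r < k * d" "\<not> (j * d \<le> r \<and> r < j * d + d)" and s: "s < k * d"
  shows "X $$ (r, s) = 0"
proof -
  have "(\<Sum>r\<in>{..<k * d} - {j * d..<j * d + d}. Re (X $$ (r, r))) = 0"
    using mtrace_split_block[OF psd_carrier[OF X] j] full by simp
  hence "\<forall>r\<in>{..<k * d} - {j * d..<j * d + d}. Re (X $$ (r, r)) = 0"
    by (subst (asm) sum_nonneg_eq_0_iff) (use psd_diag_real_nonneg(2)[OF X] in auto)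
  hence "Re (X $$ (r, r)) = 0" using r by auto
  hence "X $$ (r, r) = 0" using psd_diag_real_nonneg(1)[OF X r(1)] by simp
  thus ?thesis by (rule psd_index_eq_0_if_diag_eq_0[OF X r(1) s])
qed

lemma ptrace_B_eq_diag_block:
  assumes j: "j < k"
    and z: "\<And>r s. r < k * d \<Longrightarrow> \<not> (j * d \<le> r \<and> r < j * d + d) \<Longrightarrow> s < k * d \<Longrightarrow> X $$ (r, s) = 0"
  shows "ptrace_B k d X = diag_block d j X"
proof (rule eq_matI)
  fix a b assume "a < dim_row (diag_block d j X)" "b < dim_col (diag_block d j X)"
  hence ab: "a < d" "b < d" by (auto simp: diag_block_def)
  have "(\<Sum>i<k. X $$ (i * d + a, i * d + b)) = (\<Sum>i<k. if i = j then X $$ (j * d + a, j * d + b) else 0)"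
    using z block_index_outside ab block_index_less by (intro sum.cong refl) auto
  thus "ptrace_B k d X $$ (a, b) = diag_block d j X $$ (a, b)"
    unfolding ptrace_B_def using ab j by simp
qed (auto simp: ptrace_B_def diag_block_def)

lemma mean_eq_1_imp_eq_1:
  fixes x :: "nat \<Rightarrow> real"
  assumes mean: "(\<Sum>j<k. 1 / real k * x j) = 1" and le: "\<And>j. j < k \<Longrightarrow> x j \<le> 1" and j: "j < k"
  shows "x j = 1"
proof -
  have "(\<Sum>j<k. 1 / real k * (1 - x j)) = (\<Sum>j<k. 1 / real k) - (\<Sum>j<k. 1 / real k * x j)"
    by (simp add: sum_subtractf right_diff_distrib)
  also have "\<dots> = 0" unfolding mean using j by simp
  finally have "\<forall>i\<in>{..<k}. 1 / real k * (1 - x i) = 0"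
    by (subst (asm) sum_nonneg_eq_0_iff) (use le in auto)
  thus ?thesis using j by auto
qed

lemma robustness_le:
  assumes feasible: "\<And>s. s > t \<Longrightarrow> \<exists>\<tau>. density d \<tau> \<and>
      incoherent d (complex_of_real (1 / (1 + s)) \<cdot>\<^sub>m (\<sigma> + complex_of_real s \<cdot>\<^sub>m \<tau>))"
    and t: "0 \<le> t"
  shows "0 \<le> robustness d \<sigma> \<and> robustness d \<sigma> \<le> t"
proof -
  define R where "R = {s. s \<ge> 0 \<and> (\<exists>\<tau>. density d \<tau> \<and>
      incoherent d (complex_of_real (1 / (1 + s)) \<cdot>\<^sub>m (\<sigma> + complex_of_real s \<cdot>\<^sub>m \<tau>)))}"
  have inR: "s \<in> R" if "s > t" for s unfolding R_def using feasible[OF that] that t by auto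
  have ne: "R \<noteq> {}" using inR[of "t + 1"] by auto
  have lb: "\<And>x. x \<in> R \<Longrightarrow> 0 \<le> x" unfolding R_def by auto
  hence "bdd_below R" unfolding bdd_below_def by blast
  hence "Inf R \<le> y" if "t < y" for y using inR[OF that] by (rule cInf_lower[rotated])
  hence "Inf R \<le> t" by (rule dense_ge)
  moreover have "0 \<le> Inf R" using ne lb by (rule cInf_greatest)
  ultimately show ?thesis unfolding robustness_def R_def by simp
qed

lemma one_le_Re_mtrace_if_dominated:
  assumes "D \<in> carrier_mat n n" "\<sigma> \<in> carrier_mat n n" "mtrace \<sigma> = 1" "psd n (D - \<sigma>)"
  shows "1 \<le> Re (mtrace D)"
  using mtrace_minus[OF assms(1,2)] Re_mtrace_psd_nonneg[OF assms(4)] assms(3) by simp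

lemma incoherent_normalized_diagonal:
  assumes "psd n D" "diagonal_mat D" "0 < Re (mtrace D)"
  shows "incoherent n (complex_of_real (1 / Re (mtrace D)) \<cdot>\<^sub>m D)"
proof -
  have "mtrace (complex_of_real (1 / Re (mtrace D)) \<cdot>\<^sub>m D) = 1"
  proof -
    have "mtrace (complex_of_real (1 / Re (mtrace D)) \<cdot>\<^sub>m D) = complex_of_real (1 / Re (mtrace D) * Re (mtrace D))"
      unfolding mtrace_smult[OF psd_carrier[OF assms(1)]] of_real_mult mtrace_psd_real[OF assms(1)] ..
    thus ?thesis using assms(3) by simp
  qed
  moreover have "diagonal_mat (complex_of_real (1 / Re (mtrace D)) \<cdot>\<^sub>m D)"
    using assms(2) unfolding diagonal_mat_def by simp
  moreover have "psd n (complex_of_real (1 / Re (mtrace D)) \<cdot>\<^sub>m D)"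
    using psd_smult[OF assms(1), of "1 / Re (mtrace D)"] assms(3) by simp
  ultimately show ?thesis unfolding incoherent_def density_def by blast
qed

text \<open>If \<open>\<sigma> \<le> D\<close> with \<open>D\<close> diagonal of trace \<open>T\<close>, then for every \<open>s > T - 1\<close> the mixture
  \<open>(\<sigma> + s \<tau>)/(1 + s)\<close> equals \<open>D/T\<close> for the state \<open>\<tau> = c D + (D - \<sigma>)/s\<close> with
  \<open>c = ((1 + s)/T - 1)/s \<ge> 0\<close>.\<close>

lemma mixture_witness_eq:
  assumes D: "D \<in> carrier_mat n n" and \<sigma>: "\<sigma> \<in> carrier_mat n n" and s: "0 < s" and T: "0 < T"
  defines "c \<equiv> ((1 + s) / T - 1) / s"
  shows "complex_of_real (1 / (1 + s)) \<cdot>\<^sub>m (\<sigma> + complex_of_real s \<cdot>\<^sub>m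
      (complex_of_real c \<cdot>\<^sub>m D + complex_of_real (1 / s) \<cdot>\<^sub>m (D - \<sigma>))) = complex_of_real (1 / T) \<cdot>\<^sub>m D"
proof (rule eq_matI)
  fix a b assume "a < dim_row (complex_of_real (1 / T) \<cdot>\<^sub>m D)" "b < dim_col (complex_of_real (1 / T) \<cdot>\<^sub>m D)"
  hence ab: "a < n" "b < n" using D by auto
  have "complex_of_real (1 / (1 + s)) * (\<sigma> $$ (a, b) + complex_of_real s *
      (complex_of_real c * D $$ (a, b) + complex_of_real (1 / s) * (D $$ (a, b) - \<sigma> $$ (a, b))))
      = complex_of_real (1 / (1 + s)) * complex_of_real (s * c + 1) * D $$ (a, b)"
    using s by (simp add: algebra_simps)
  also have "\<dots> = complex_of_real ((s * c + 1) / (1 + s)) * D $$ (a, b)"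
    unfolding of_real_mult[symmetric] by simp
  also have "s * c + 1 = (1 + s) / T" unfolding c_def using s by simp
  also have "(1 + s) / T / (1 + s) = 1 / T" using s by simp
  finally show "(complex_of_real (1 / (1 + s)) \<cdot>\<^sub>m (\<sigma> + complex_of_real s \<cdot>\<^sub>m
      (complex_of_real c \<cdot>\<^sub>m D + complex_of_real (1 / s) \<cdot>\<^sub>m (D - \<sigma>)))) $$ (a, b)
      = (complex_of_real (1 / T) \<cdot>\<^sub>m D) $$ (a, b)"
    using ab D \<sigma> by simp
qed (use D \<sigma> in auto)

lemma incoherent_mixture_if_dominated:
  assumes D: "psd d D" "diagonal_mat D" and \<sigma>: "\<sigma> \<in> carrier_mat d d" "mtrace \<sigma> = 1"
    and E: "psd d (D - \<sigma>)" and s: "s > Re (mtrace D) - 1"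
  shows "\<exists>\<tau>. density d \<tau> \<and>
    incoherent d (complex_of_real (1 / (1 + s)) \<cdot>\<^sub>m (\<sigma> + complex_of_real s \<cdot>\<^sub>m \<tau>))"
proof -
  define T where "T = Re (mtrace D)"
  have Dc: "D \<in> carrier_mat d d" using psd_carrier[OF D(1)] .
  have T1: "1 \<le> T" unfolding T_def by (rule one_le_Re_mtrace_if_dominated[OF Dc \<sigma> E])
  have s0: "0 < s" using s T1 unfolding T_def by simp
  define c where "c = ((1 + s) / T - 1) / s"
  have c0: "0 \<le> c" unfolding c_def using s0 s T1 unfolding T_def by (simp add: field_simps)
  define \<tau> where "\<tau> = complex_of_real c \<cdot>\<^sub>m D + complex_of_real (1 / s) \<cdot>\<^sub>m (D - \<sigma>)"
  have "mtrace \<tau> = complex_of_real c * mtrace D + complex_of_real (1 / s) * mtrace (D - \<sigma>)"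
    unfolding \<tau>_def mtrace_eq_sum[OF add_carrier_mat[OF smult_carrier_mat[OF minus_carrier_mat[OF \<sigma>(1)]]]]
      mtrace_eq_sum[OF Dc] mtrace_eq_sum[OF minus_carrier_mat[OF \<sigma>(1)]]
    using Dc \<sigma>(1) by (simp add: sum.distrib sum_distrib_left)
  also have "\<dots> = complex_of_real (c * T + (T - 1) / s)"
    using mtrace_psd_real[OF D(1)] unfolding mtrace_minus[OF Dc \<sigma>(1)] \<sigma>(2) T_def by simp
  also have "c * T + (T - 1) / s = 1"
    unfolding c_def using s0 T1 by (simp add: field_simps)
  finally have \<tau>_density: "density d \<tau>"
    unfolding density_def \<tau>_def using psd_lincomb[OF D(1) E c0, of "1 / s"] s0 by simp
  have "complex_of_real (1 / (1 + s)) \<cdot>\<^sub>m (\<sigma> + complex_of_real s \<cdot>\<^sub>m \<tau>)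
      = complex_of_real (1 / T) \<cdot>\<^sub>m D"
    unfolding \<tau>_def c_def using mixture_witness_eq[OF Dc \<sigma>(1) s0] T1 by simp
  hence "incoherent d (complex_of_real (1 / (1 + s)) \<cdot>\<^sub>m (\<sigma> + complex_of_real s \<cdot>\<^sub>m \<tau>))"
    using incoherent_normalized_diagonal[OF D] T1 unfolding T_def by simp
  thus ?thesis using \<tau>_density by blast
qed

lemma robustness_le_if_dominated:
  assumes "psd d D" "diagonal_mat D" "\<sigma> \<in> carrier_mat d d" "mtrace \<sigma> = 1" "psd d (D - \<sigma>)"
  shows "0 \<le> robustness d \<sigma> \<and> robustness d \<sigma> \<le> Re (mtrace D) - 1"
proof (rule robustness_le)
  show "\<exists>\<tau>. density d \<tau> \<and> incoherent d (complex_of_real (1 / (1 + s)) \<cdot>\<^sub>m (\<sigma> + complex_of_real s \<cdot>\<^sub>m \<tau>))"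
    if "s > Re (mtrace D) - 1" for s
    using incoherent_mixture_if_dominated[OF assms that] .
  show "0 \<le> Re (mtrace D) - 1"
    using one_le_Re_mtrace_if_dominated[OF psd_carrier[OF assms(1)] assms(3-5)] by simp
qed

section \<open>Spectrum and von Neumann entropy\<close>

lemma mtrace_mult_comm:
  assumes X: "X \<in> carrier_mat n n" and Y: "Y \<in> carrier_mat n n"
  shows "mtrace (X * Y) = mtrace (Y * X)"
proof -
  have "mtrace (X * Y) = (\<Sum>i<n. \<Sum>j<n. X $$ (i, j) * Y $$ (j, i))"
    unfolding mtrace_eq_sum[OF mult_carrier_mat[OF X Y]] using X Y
    by (intro sum.cong refl) (simp add: scalar_prod_def row_def col_def atLeast0LessThan)
  also have "\<dots> = (\<Sum>j<n. \<Sum>i<n. Y $$ (j, i) * X $$ (i, j))"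
    by (subst sum.swap) (simp add: mult.commute)
  also have "\<dots> = mtrace (Y * X)"
    unfolding mtrace_eq_sum[OF mult_carrier_mat[OF Y X]] using X Y
    by (intro sum.cong refl) (simp add: scalar_prod_def row_def col_def atLeast0LessThan)
  finally show ?thesis .
qed

lemma mtrace_similar:
  assumes "similar_mat A B"
  shows "mtrace A = mtrace B"
proof -
  obtain n P Q where c: "{A, B, P, Q} \<subseteq> carrier_mat n n" and QP: "Q * P = 1\<^sub>m n"
    and A: "A = P * B * Q" using similar_matD[OF assms] by blast
  have P: "P \<in> carrier_mat n n" and B: "B \<in> carrier_mat n n" and Q: "Q \<in> carrier_mat n n" using c by auto
  have "mtrace A = mtrace (Q * (P * B))" unfolding A by (rule mtrace_mult_comm) (use P B Q in auto)
  also have "Q * (P * B) = B" using P B Q QP by (simp add: assoc_mult_mat[symmetric])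
  finally show ?thesis .
qed

lemma proots_prod_linear: "proots (\<Prod>a\<leftarrow>xs. [:- a, 1:]) = mset (xs :: complex list)"
proof (induction xs)
  case (Cons x xs)
  have "(\<Prod>a\<leftarrow>xs. [:- a, 1:]) \<noteq> (0 :: complex poly)" by (auto simp: prod_list_zero_iff)
  hence "proots ([:- x, 1:] * (\<Prod>a\<leftarrow>xs. [:- a, 1:])) = proots [:- x, 1:] + proots (\<Prod>a\<leftarrow>xs. [:- a, 1:])"
    by (intro proots_mult) simp_all
  thus ?case using Cons by simp
qed simp

text \<open>By Schur triangularization the roots of the characteristic polynomial, with
  multiplicity, are the diagonal of a similar matrix.\<close>

lemma proots_char_poly_diag:
  assumes A: "(A :: complex mat) \<in> carrier_mat n n"
  obtains B where "similar_mat A B" "proots (char_poly A) = mset (diag_mat B)"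
proof -
  obtain es where "char_poly A = (\<Prod>a\<leftarrow>es. [:- a, 1:])" using char_poly_factorized[OF A] by blast
  then obtain B where B: "B \<in> carrier_mat n n" "upper_triangular B" and sim: "similar_mat A B"
    using schur_upper_triangular[OF A] by blast
  have "char_poly A = (\<Prod>a\<leftarrow>diag_mat B. [:- a, 1:])"
    unfolding char_poly_similar[OF sim] by (rule char_poly_upper_triangular[OF B])
  thus ?thesis using that sim proots_prod_linear by simp
qed

lemma sum_mset_proots_char_poly:
  assumes A: "(A :: complex mat) \<in> carrier_mat n n"
  shows "sum_mset (proots (char_poly A)) = mtrace A"
proof -
  obtain B where sim: "similar_mat A B" and pr: "proots (char_poly A) = mset (diag_mat B)"
    using proots_char_poly_diag[OF A] .
  have "sum_list (diag_mat B) = mtrace B"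
    unfolding diag_mat_def mtrace_def by (simp add: sum_list_sum_nth atLeast0LessThan)
  thus ?thesis unfolding pr sum_mset_sum_list mtrace_similar[OF sim] .
qed

lemma eigenvalue_if_mem_proots_char_poly:
  assumes A: "(A :: complex mat) \<in> carrier_mat n n" and x: "x \<in># proots (char_poly A)"
  shows "eigenvalue A x"
proof -
  have "char_poly A \<noteq> 0" using x by auto
  hence "poly (char_poly A) x = 0" using x by simp
  thus ?thesis using eigenvalue_root_char_poly[OF A] by blast
qed

lemma smult_mat_mult_vec:
  "A \<in> carrier_mat n m \<Longrightarrow> v \<in> carrier_vec m \<Longrightarrow> (c \<cdot>\<^sub>m A) *\<^sub>v v = c \<cdot>\<^sub>v (A *\<^sub>v (v :: 'a :: comm_ring vec))"
  by (intro eq_vecI) (auto simp: scalar_prod_def sum_distrib_left mult.assoc)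

lemma eigenvalue_scaled_idempotent:
  assumes A: "(A :: complex mat) \<in> carrier_mat n n" and sq: "A * A = c \<cdot>\<^sub>m A" and ev: "eigenvalue A l"
  shows "l = 0 \<or> l = c"
proof -
  obtain v where "eigenvector A v l" using ev unfolding eigenvalue_def by blast
  hence v: "v \<in> carrier_vec n" "v \<noteq> 0\<^sub>v n" and Av: "A *\<^sub>v v = l \<cdot>\<^sub>v v"
    using A unfolding eigenvector_def by auto
  have "(l * l) \<cdot>\<^sub>v v = (A * A) *\<^sub>v v"
    using A v(1) by (simp add: Av mult_mat_vec smult_smult_assoc)
  also have "\<dots> = (c * l) \<cdot>\<^sub>v v"
    unfolding sq smult_mat_mult_vec[OF A v(1)] Av by (simp add: smult_smult_assoc)
  finally have eq: "(l * l) \<cdot>\<^sub>v v = (c * l) \<cdot>\<^sub>v v" .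
  obtain a where a: "a < n" "v $ a \<noteq> 0"
    using v by (metis carrier_vecD eq_vecI index_zero_vec)
  have "(l * l) * v $ a = (c * l) * v $ a"
    using arg_cong[OF eq, of "\<lambda>w. w $ a"] a v(1) by simp
  hence "l * (l - c) = 0" using a(2) by (simp add: algebra_simps)
  thus ?thesis by auto
qed

text \<open>A state with \<open>A\<^sup>2 = c A\<close> is maximally mixed on a subspace of dimension \<open>1/c\<close>.\<close>

lemma vn_entropy_scaled_projection:
  assumes A: "A \<in> carrier_mat n n" and sq: "A * A = complex_of_real c \<cdot>\<^sub>m A"
    and c: "0 < c" and tr: "mtrace A = 1"
  shows "vn_entropy A = - log 2 c"
proof -
  have "ent_term (Re x) = - log 2 c * Re x" if "x \<in># proots (char_poly A)" for x
    using eigenvalue_scaled_idempotent[OF A sq eigenvalue_if_mem_proots_char_poly[OF A that]] c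
    by (auto simp: ent_term_def)
  hence "vn_entropy A = (\<Sum>x\<in>#proots (char_poly A). - log 2 c * Re x)"
    unfolding vn_entropy_def by (intro arg_cong[where f = sum_mset] image_mset_cong) auto
  also have "\<dots> = - log 2 c * Re (sum_mset (proots (char_poly A)))"
  proof -
    have "(\<Sum>x\<in>#M. - log 2 c * Re x) = - log 2 c * Re (sum_mset M)" for M :: "complex multiset"
      by (induction M) (auto simp: algebra_simps)
    thus ?thesis .
  qed
  finally show ?thesis unfolding sum_mset_proots_char_poly[OF A] tr by simp
qed

section \<open>Orthonormal ensembles\<close>

locale orthonormal_family =
  fixes d k :: nat and \<psi> :: "nat \<Rightarrow> complex vec"
  assumes k_pos: "1 \<le> k"
    and carrier: "\<And>j. j < k \<Longrightarrow> \<psi> j \<in> carrier_vec d"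
    and normalized: "\<And>j. j < k \<Longrightarrow> conjugate (\<psi> j) \<bullet> \<psi> j = 1"
    and orthogonal: "\<And>i j. i < k \<Longrightarrow> j < k \<Longrightarrow> i \<noteq> j \<Longrightarrow> conjugate (\<psi> i) \<bullet> \<psi> j = 0"
begin

definition braket :: "nat \<Rightarrow> (nat \<Rightarrow> complex) \<Rightarrow> complex" where
  "braket j v = (\<Sum>a<d. cnj (\<psi> j $ a) * v a)"

lemma orthonormal:
  assumes "i < k" "j < k"
  shows "(\<Sum>a<d. cnj (\<psi> i $ a) * \<psi> j $ a) = (if i = j then 1 else 0)"
proof -
  have "conjugate (\<psi> i) \<bullet> \<psi> j = (\<Sum>a<d. cnj (\<psi> i $ a) * \<psi> j $ a)"
    using carrier[OF assms(1)] carrier[OF assms(2)] unfolding scalar_prod_def by (simp add: atLeast0LessThan)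
  thus ?thesis using normalized orthogonal assms by metis
qed

lemma braket_psi: "i < k \<Longrightarrow> j < k \<Longrightarrow> braket i (\<lambda>a. \<psi> j $ a) = (if i = j then 1 else 0)"
  unfolding braket_def using orthonormal by simp

lemma d_pos: "0 < d"
  using orthonormal[of 0 0] k_pos by (cases d) auto

lemma proj_carrier: "j < k \<Longrightarrow> proj (\<psi> j) \<in> carrier_mat d d"
  using carrier unfolding proj_def by auto

lemma proj_index: "j < k \<Longrightarrow> a < d \<Longrightarrow> b < d \<Longrightarrow> proj (\<psi> j) $$ (a, b) = \<psi> j $ a * cnj (\<psi> j $ b)"
  using carrier[of j] unfolding proj_def by auto

lemma mtrace_proj: "j < k \<Longrightarrow> mtrace (proj (\<psi> j)) = 1"
  unfolding mtrace_eq_sum[OF proj_carrier] using proj_index orthonormal by (simp add: mult.commute)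

lemma qform_proj: "j < k \<Longrightarrow> qform d (proj (\<psi> j)) v = cnj (braket j v) * braket j v"
  unfolding qform_def braket_def using proj_index
  by (simp add: sum_product cnj_sum sum_distrib_left mult_ac)

lemma psd_proj: "j < k \<Longrightarrow> psd d (proj (\<psi> j))"
  unfolding psd_iff_qform qform_proj using proj_carrier proj_index by (simp add: mult.commute)

lemma bessel_identity:
  "(\<Sum>a<d. cnj (v a - (\<Sum>i<k. braket i v * \<psi> i $ a)) * (v a - (\<Sum>i<k. braket i v * \<psi> i $ a)))
   = (\<Sum>a<d. cnj (v a) * v a) - (\<Sum>i<k. cnj (braket i v) * braket i v)"
proof -
  let ?g = "\<lambda>i. braket i v"
  have S1: "(\<Sum>a<d. cnj (v a) * (\<Sum>i<k. ?g i * \<psi> i $ a)) = (\<Sum>i<k. cnj (?g i) * ?g i)"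
  proof -
    have "(\<Sum>a<d. cnj (v a) * (\<Sum>i<k. ?g i * \<psi> i $ a)) = (\<Sum>i<k. ?g i * (\<Sum>a<d. cnj (v a) * \<psi> i $ a))"
      by (simp add: sum_distrib_left sum_distrib_right mult_ac sum.swap[of _ "{..<d}"])
    thus ?thesis unfolding braket_def by (simp add: cnj_sum mult_ac)
  qed
  have S2: "(\<Sum>a<d. cnj (\<Sum>i<k. ?g i * \<psi> i $ a) * v a) = (\<Sum>i<k. cnj (?g i) * ?g i)"
  proof -
    have "(\<Sum>a<d. cnj (\<Sum>i<k. ?g i * \<psi> i $ a) * v a) = (\<Sum>i<k. cnj (?g i) * (\<Sum>a<d. cnj (\<psi> i $ a) * v a))"
      by (simp add: sum_distrib_left sum_distrib_right mult_ac sum.swap[of _ "{..<d}"])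
    thus ?thesis unfolding braket_def by (simp add: mult_ac)
  qed
  have "(\<Sum>a<d. cnj (\<Sum>i<k. ?g i * \<psi> i $ a) * (\<Sum>j<k. ?g j * \<psi> j $ a))
      = (\<Sum>a<d. \<Sum>i<k. \<Sum>j<k. cnj (?g i) * ?g j * (cnj (\<psi> i $ a) * \<psi> j $ a))"
    unfolding cnj_sum sum_product by (intro sum.cong refl) (simp add: mult_ac)
  also have "\<dots> = (\<Sum>i<k. \<Sum>j<k. \<Sum>a<d. cnj (?g i) * ?g j * (cnj (\<psi> i $ a) * \<psi> j $ a))"
    by (rule trans[OF sum_rotate3], rule sum_rotate3)
  also have "\<dots> = (\<Sum>i<k. \<Sum>j<k. cnj (?g i) * ?g j * (if i = j then 1 else 0))"
    by (intro sum.cong refl) (simp add: sum_distrib_left[symmetric] orthonormal)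
  also have "\<dots> = (\<Sum>i<k. cnj (?g i) * ?g i)"
    by (simp add: if_distrib[of "\<lambda>x. _ * x"] cong: if_cong)
  finally have S3: "(\<Sum>a<d. cnj (\<Sum>i<k. ?g i * \<psi> i $ a) * (\<Sum>j<k. ?g j * \<psi> j $ a)) = (\<Sum>i<k. cnj (?g i) * ?g i)" .
  have expand: "cnj (x - w) * (x - w) = cnj x * x - cnj x * w - cnj w * x + cnj w * w" for x w :: complex
    by (simp add: algebra_simps)
  show ?thesis unfolding expand sum.distrib sum_subtractf S1 S2 S3 by simp
qed

lemma bessel_inequality: "(\<Sum>i<k. Re (cnj (braket i v) * braket i v)) \<le> (\<Sum>a<d. Re (cnj (v a) * v a))"
proof -
  have "0 \<le> Re (\<Sum>a<d. cnj (v a - (\<Sum>i<k. braket i v * \<psi> i $ a)) * (v a - (\<Sum>i<k. braket i v * \<psi> i $ a)))"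
    unfolding Re_sum by (intro sum_nonneg) (simp only: Re_cnj_mult_self_nonneg)
  thus ?thesis unfolding bessel_identity by simp
qed

definition proj_complement :: "complex mat" where
  "proj_complement = mat d d (\<lambda>(a, b). (if a = b then 1 else 0) - (\<Sum>i<k. \<psi> i $ a * cnj (\<psi> i $ b)))"

lemma proj_complement_carrier: "proj_complement \<in> carrier_mat d d"
  unfolding proj_complement_def by auto

lemma proj_complement_index:
  "a < d \<Longrightarrow> b < d \<Longrightarrow> proj_complement $$ (a, b) = (if a = b then 1 else 0) - (\<Sum>i<k. \<psi> i $ a * cnj (\<psi> i $ b))"
  unfolding proj_complement_def by simp

lemma qform_proj_complement:
  "qform d proj_complement v = (\<Sum>a<d. cnj (v a) * v a) - (\<Sum>i<k. cnj (braket i v) * braket i v)"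
proof -
  have "qform d proj_complement v = (\<Sum>a<d. \<Sum>b<d. cnj (v a) * (if a = b then 1 else 0) * v b) -
      (\<Sum>a<d. \<Sum>b<d. \<Sum>i<k. (cnj (v a) * \<psi> i $ a) * (cnj (\<psi> i $ b) * v b))"
    unfolding proj_complement_def qform_mat by (simp add: algebra_simps sum_distrib_left sum_subtractf)
  also have "(\<Sum>a<d. \<Sum>b<d. \<Sum>i<k. (cnj (v a) * \<psi> i $ a) * (cnj (\<psi> i $ b) * v b)) =
       (\<Sum>i<k. (\<Sum>a<d. cnj (v a) * \<psi> i $ a) * (\<Sum>b<d. cnj (\<psi> i $ b) * v b))"
    by (rule trans[OF sum_rotate3]) (simp add: sum_product)
  also have "\<dots> = (\<Sum>i<k. cnj (braket i v) * braket i v)"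
    unfolding braket_def by (simp add: cnj_sum mult_ac)
  finally show ?thesis by (simp add: if_distrib[of "\<lambda>x. _ * x"] if_distrib[of "\<lambda>x. x * _"] cong: if_cong)
qed

lemma psd_proj_complement: "psd d proj_complement"
proof -
  have "\<forall>a<d. \<forall>b<d. proj_complement $$ (a, b) = cnj (proj_complement $$ (b, a))"
    by (simp add: proj_complement_index mult.commute)
  moreover have "Im (qform d proj_complement v) = 0 \<and> 0 \<le> Re (qform d proj_complement v)" for v
    unfolding qform_proj_complement using bessel_inequality[of v] by (simp add: mult.commute)
  ultimately show ?thesis unfolding psd_iff_qform using proj_complement_carrier by blast
qed

lemma qform_proj_complement_psi:
  assumes j: "j < k"
  shows "qform d proj_complement (\<lambda>a. \<psi> j $ a) = 0"
proof -
  have "(\<Sum>i<k. cnj (braket i (\<lambda>a. \<psi> j $ a)) * braket i (\<lambda>a. \<psi> j $ a)) = (\<Sum>i<k. if i = j then 1 else 0)"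
    using braket_psi[OF _ j] by (intro sum.cong refl) auto
  thus ?thesis unfolding qform_proj_complement using orthonormal[OF j j] j by simp
qed

lemma mtrace_mult_proj:
  assumes E: "E \<in> carrier_mat d d" and j: "j < k"
  shows "mtrace (E * proj (\<psi> j)) = qform d E (\<lambda>a. \<psi> j $ a)"
proof -
  have P: "proj (\<psi> j) \<in> carrier_mat d d" using proj_carrier[OF j] .
  have "mtrace (E * proj (\<psi> j)) = (\<Sum>r<d. \<Sum>c<d. E $$ (r, c) * (\<psi> j $ c * cnj (\<psi> j $ r)))"
    unfolding mtrace_eq_sum[OF mult_carrier_mat[OF E P]] using E P proj_index[OF j]
    by (intro sum.cong refl) (simp add: scalar_prod_def row_def col_def atLeast0LessThan)
  thus ?thesis unfolding qform_def by (simp add: mult_ac)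
qed

lemma povm_success_le_1:
  assumes E: "povm d k E"
  shows "(\<Sum>j<k. 1 / real k * Re (mtrace (E j * proj (\<psi> j)))) \<le> 1"
proof -
  have Ep: "\<And>i. i < k \<Longrightarrow> psd d (E i)" using E unfolding povm_def by auto
  have "Re (mtrace (E j * proj (\<psi> j))) \<le> 1" if j: "j < k" for j
  proof -
    let ?v = "\<lambda>a. \<psi> j $ a"
    have "Re (qform d (E j) ?v) \<le> (\<Sum>i<k. Re (qform d (E i) ?v))"
      by (rule member_le_sum) (use j Ep in \<open>auto simp: psd_iff_qform\<close>)
    also have "\<dots> = 1" using sum_qform_povm[OF E, of ?v] orthonormal[OF j j] by (simp flip: Re_sum)
    finally show ?thesis unfolding mtrace_mult_proj[OF psd_carrier[OF Ep[OF j]] j] .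
  qed
  hence "(\<Sum>j<k. 1 / real k * Re (mtrace (E j * proj (\<psi> j)))) \<le> (\<Sum>j<k. 1 / real k * 1)"
    by (intro sum_mono mult_left_mono) auto
  also have "\<dots> = 1" using k_pos by simp
  finally show ?thesis .
qed

text \<open>The projection onto the orthogonal complement of the span of the \<open>\<psi>\<^sub>j\<close> is added to
  outcome \<open>0\<close> only to complete the measurement to a POVM.\<close>

definition optimal_povm :: "nat \<Rightarrow> complex mat" where
  "optimal_povm j = proj (\<psi> j) + (if j = 0 then proj_complement else 0\<^sub>m d d)"

lemma optimal_povm_carrier: "j < k \<Longrightarrow> optimal_povm j \<in> carrier_mat d d"
  unfolding optimal_povm_def using proj_carrier proj_complement_carrier by simp

lemma optimal_povm_index:
  "j < k \<Longrightarrow> a < d \<Longrightarrow> b < d \<Longrightarrow>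
    optimal_povm j $$ (a, b) = \<psi> j $ a * cnj (\<psi> j $ b) + (if j = 0 then proj_complement $$ (a, b) else 0)"
  unfolding optimal_povm_def using proj_index proj_complement_carrier by auto

lemma povm_optimal_povm: "povm d k optimal_povm"
proof -
  have "psd d (optimal_povm j)" if "j < k" for j
    unfolding optimal_povm_def using psd_add[OF psd_proj[OF that]] psd_proj_complement psd_zero_mat by simp
  moreover have "mat d d (\<lambda>(a, b). \<Sum>j<k. optimal_povm j $$ (a, b)) = 1\<^sub>m d"
  proof (rule eq_matI)
    fix a b assume "a < dim_row (1\<^sub>m d :: complex mat)" "b < dim_col (1\<^sub>m d :: complex mat)"
    hence ab: "a < d" "b < d" by auto
    have "(\<Sum>j<k. optimal_povm j $$ (a, b)) = (\<Sum>j<k. \<psi> j $ a * cnj (\<psi> j $ b)) + proj_complement $$ (a, b)"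
      using ab k_pos by (simp add: optimal_povm_index sum.distrib)
    also have "\<dots> = (if a = b then 1 else 0)" using ab by (simp add: proj_complement_index)
    finally show "mat d d (\<lambda>(a, b). \<Sum>j<k. optimal_povm j $$ (a, b)) $$ (a, b) = 1\<^sub>m d $$ (a, b)"
      using ab by simp
  qed auto
  ultimately show ?thesis unfolding povm_def by blast
qed

lemma optimal_povm_success: "(\<Sum>j<k. 1 / real k * Re (mtrace (optimal_povm j * proj (\<psi> j)))) = 1"
proof -
  have "mtrace (optimal_povm j * proj (\<psi> j)) = 1" if j: "j < k" for j
  proof -
    have "qform d (optimal_povm j) (\<lambda>a. \<psi> j $ a) = qform d (proj (\<psi> j)) (\<lambda>a. \<psi> j $ a) +
        (if j = 0 then qform d proj_complement (\<lambda>a. \<psi> j $ a) else qform d (0\<^sub>m d d) (\<lambda>a. \<psi> j $ a))"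
      unfolding optimal_povm_def using qform_add proj_carrier[OF j] proj_complement_carrier by simp
    also have "\<dots> = 1"
      unfolding qform_proj[OF j] braket_psi[OF j j] qform_proj_complement_psi[OF j] by (simp add: qform_def)
    finally show ?thesis unfolding mtrace_mult_proj[OF optimal_povm_carrier[OF j] j] .
  qed
  thus ?thesis using k_pos by simp
qed

lemma P_suc_eq_1: "P_suc d k (\<lambda>_. 1 / real k) (\<lambda>j. proj (\<psi> j)) = 1"
  unfolding P_suc_def
proof (rule cSup_eq_maximum)
  show "1 \<in> {\<Sum>j<k. 1 / real k * Re (mtrace (E j * proj (\<psi> j))) |E. povm d k E}"
    using optimal_povm_success povm_optimal_povm by force
qed (use povm_success_le_1 in blast)

lemma psd_one_minus_proj:
  assumes j: "j < k"
  shows "psd d (1\<^sub>m d - proj (\<psi> j))"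
proof -
  have P: "proj (\<psi> j) \<in> carrier_mat d d" using proj_carrier[OF j] .
  have "\<forall>a<d. \<forall>b<d. (1\<^sub>m d - proj (\<psi> j)) $$ (a, b) = cnj ((1\<^sub>m d - proj (\<psi> j)) $$ (b, a))"
    using P proj_index[OF j] by (simp add: mult.commute)
  moreover have "Im (qform d (1\<^sub>m d - proj (\<psi> j)) v) = 0 \<and> 0 \<le> Re (qform d (1\<^sub>m d - proj (\<psi> j)) v)" for v
  proof -
    have "Re (cnj (braket j v) * braket j v) \<le> (\<Sum>i<k. Re (cnj (braket i v) * braket i v))"
      by (rule member_le_sum) (use j Re_cnj_mult_self_nonneg in auto)
    also have "\<dots> \<le> (\<Sum>a<d. Re (cnj (v a) * v a))" by (rule bessel_inequality)
    finally show ?thesis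
      unfolding qform_minus[OF one_carrier_mat P] qform_one_mat qform_proj[OF j]
      by (simp add: mult.commute)
  qed
  ultimately show ?thesis unfolding psd_iff_qform using minus_carrier_mat[OF P] by blast
qed

definition perfectly_discriminating :: "complex mat list \<Rightarrow> bool" where
  "perfectly_discriminating Ks \<longleftrightarrow>
    (\<Sum>j<k. 1 / real k * Re (block_weight d j (apply_channel (k * d) Ks (proj (\<psi> j))))) = 1"

lemma perfect_block_weight:
  assumes kc: "kraus_channel d (k * d) Ks"
    and perfect: "perfectly_discriminating Ks"
    and j: "j < k"
  shows "Re (block_weight d j (apply_channel (k * d) Ks (proj (\<psi> j)))) = 1"
proof (rule mean_eq_1_imp_eq_1[OF perfect[unfolded perfectly_discriminating_def] _ j])
  fix i assume i: "i < k"
  have Ks: "\<forall>K\<in>set Ks. K \<in> carrier_mat (k * d) d" using kc unfolding kraus_channel_def by blast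
  show "Re (block_weight d i (apply_channel (k * d) Ks (proj (\<psi> i)))) \<le> 1"
    using block_weight_le_mtrace[OF psd_apply_channel[OF Ks psd_proj[OF i]] i]
    unfolding mtrace_apply_channel[OF kc proj_carrier[OF i]] mtrace_proj[OF i] by simp
qed

lemma ptrace_B_perfect:
  assumes kc: "kraus_channel d (k * d) Ks"
    and perfect: "perfectly_discriminating Ks"
    and j: "j < k"
  shows "ptrace_B k d (apply_channel (k * d) Ks (proj (\<psi> j))) = diag_block d j (apply_channel (k * d) Ks (proj (\<psi> j)))"
proof (rule ptrace_B_eq_diag_block[OF j])
  have Ks: "\<forall>K\<in>set Ks. K \<in> carrier_mat (k * d) d" using kc unfolding kraus_channel_def by blast
  have "Re (block_weight d j (apply_channel (k * d) Ks (proj (\<psi> j)))) = Re (mtrace (apply_channel (k * d) Ks (proj (\<psi> j))))"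
    unfolding perfect_block_weight[OF kc perfect j] mtrace_apply_channel[OF kc proj_carrier[OF j]] mtrace_proj[OF j]
    by simp
  thus "apply_channel (k * d) Ks (proj (\<psi> j)) $$ (r, s) = 0"
    if "r < k * d" "\<not> (j * d \<le> r \<and> r < j * d + d)" "s < k * d" for r s
    using psd_zero_outside_block[OF psd_apply_channel[OF Ks psd_proj[OF j]] j _ that] by blast
qed

text \<open>The image \<open>D\<close> of the identity is diagonal and dominates the output of every \<open>\<psi>\<^sub>j\<close>,
  so the robustness of the \<open>j\<close>-th output is bounded by the trace of the \<open>j\<close>-th block of \<open>D\<close>.\<close>

lemma robustness_perfect_le:
  assumes mio: "MIO d (k * d) Ks"
    and perfect: "perfectly_discriminating Ks"
    and j: "j < k"
  shows "0 \<le> robustness d (ptrace_B k d (apply_channel (k * d) Ks (proj (\<psi> j)))) \<and>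
    robustness d (ptrace_B k d (apply_channel (k * d) Ks (proj (\<psi> j))))
      \<le> Re (block_weight d j (apply_channel (k * d) Ks (1\<^sub>m d))) - 1"
proof -
  have kc: "kraus_channel d (k * d) Ks" using mio unfolding MIO_def by blast
  hence Ks: "\<forall>K\<in>set Ks. K \<in> carrier_mat (k * d) d" unfolding kraus_channel_def by blast
  let ?N = "apply_channel (k * d) Ks"
  let ?D = "diag_block d j (?N (1\<^sub>m d))"
  let ?\<sigma> = "diag_block d j (?N (proj (\<psi> j)))"
  have \<sigma>_psd: "psd d ?\<sigma>" by (rule psd_diag_block[OF psd_apply_channel[OF Ks psd_proj[OF j]] j])
  have "psd d ?D" by (rule psd_diag_block[OF psd_apply_channel[OF Ks psd_one_mat] j])
  moreover have "diagonal_mat ?D"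
    using diagonal_apply_channel_one_mat[OF mio d_pos] apply_channel_carrier[OF Ks one_carrier_mat]
      block_index_less[OF j]
    unfolding diagonal_mat_def by (auto simp: diag_block_def)
  moreover have "mtrace ?\<sigma> = 1"
    using perfect_block_weight[OF kc perfect j] mtrace_psd_real[OF \<sigma>_psd]
    unfolding block_weight_eq_mtrace_diag_block by simp
  moreover have "?D - ?\<sigma> = diag_block d j (?N (1\<^sub>m d - proj (\<psi> j)))"
    unfolding apply_channel_minus[OF Ks one_carrier_mat proj_carrier[OF j]]
    using diag_block_minus apply_channel_carrier[OF Ks] one_carrier_mat proj_carrier[OF j] j by metis
  hence "psd d (?D - ?\<sigma>)"
    using psd_diag_block[OF psd_apply_channel[OF Ks psd_one_minus_proj[OF j]] j] by simp
  ultimately show ?thesis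
    unfolding ptrace_B_perfect[OF kc perfect j] block_weight_eq_mtrace_diag_block
    using robustness_le_if_dominated diag_block_carrier by blast
qed

lemma average_robustness_le:
  assumes mio: "MIO d (k * d) Ks"
    and perfect: "perfectly_discriminating Ks"
  shows "0 \<le> (\<Sum>j<k. 1 / real k * robustness d (ptrace_B k d (apply_channel (k * d) Ks (proj (\<psi> j))))) \<and>
    (\<Sum>j<k. 1 / real k * robustness d (ptrace_B k d (apply_channel (k * d) Ks (proj (\<psi> j))))) \<le> real d / real k - 1"
proof -
  have kc: "kraus_channel d (k * d) Ks" using mio unfolding MIO_def by blast
  hence Ks: "\<forall>K\<in>set Ks. K \<in> carrier_mat (k * d) d" unfolding kraus_channel_def by blast
  let ?T = "\<lambda>j. Re (block_weight d j (apply_channel (k * d) Ks (1\<^sub>m d)))"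
  note rb = robustness_perfect_le[OF mio perfect]
  have "mtrace (1\<^sub>m d) = of_nat d"
    by (simp add: mtrace_eq_sum[OF one_carrier_mat])
  hence "(\<Sum>j<k. ?T j) = real d"
    using sum_block_weight[OF apply_channel_carrier[OF Ks one_carrier_mat]]
    unfolding mtrace_apply_channel[OF kc one_carrier_mat] by (simp flip: Re_sum)
  hence "(\<Sum>j<k. 1 / real k * (?T j - 1)) = 1 / real k * (real d - real k)"
    unfolding sum_distrib_left[symmetric] sum_subtractf by simp
  also have "\<dots> = real d / real k - 1"
    using k_pos by (simp add: field_simps)
  finally have "(\<Sum>j<k. 1 / real k * (?T j - 1)) = real d / real k - 1" .
  moreover have "(\<Sum>j<k. 1 / real k * robustness d (ptrace_B k d (apply_channel (k * d) Ks (proj (\<psi> j)))))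
      \<le> (\<Sum>j<k. 1 / real k * (?T j - 1))"
    using rb by (intro sum_mono mult_left_mono) auto
  moreover have "0 \<le> (\<Sum>j<k. 1 / real k * robustness d (ptrace_B k d (apply_channel (k * d) Ks (proj (\<psi> j)))))"
    using rb by (intro sum_nonneg) auto
  ultimately show ?thesis by linarith
qed

lemma span_proj_square:
  assumes "a < d" "b < d"
  shows "(\<Sum>c<d. (\<Sum>i<k. \<psi> i $ a * cnj (\<psi> i $ c)) * (\<Sum>j<k. \<psi> j $ c * cnj (\<psi> j $ b)))
    = (\<Sum>i<k. \<psi> i $ a * cnj (\<psi> i $ b))"
proof -
  have "(\<Sum>c<d. (\<Sum>i<k. \<psi> i $ a * cnj (\<psi> i $ c)) * (\<Sum>j<k. \<psi> j $ c * cnj (\<psi> j $ b)))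
      = (\<Sum>c<d. \<Sum>i<k. \<Sum>j<k. (\<psi> i $ a * cnj (\<psi> j $ b)) * (cnj (\<psi> i $ c) * \<psi> j $ c))"
    unfolding sum_product by (intro sum.cong refl) (simp add: mult_ac)
  also have "\<dots> = (\<Sum>i<k. \<Sum>j<k. \<Sum>c<d. (\<psi> i $ a * cnj (\<psi> j $ b)) * (cnj (\<psi> i $ c) * \<psi> j $ c))"
    by (rule trans[OF sum_rotate3], rule sum_rotate3)
  also have "\<dots> = (\<Sum>i<k. \<Sum>j<k. (\<psi> i $ a * cnj (\<psi> j $ b)) * (if i = j then 1 else 0))"
    by (intro sum.cong refl) (simp add: sum_distrib_left[symmetric] orthonormal)
  also have "\<dots> = (\<Sum>i<k. \<psi> i $ a * cnj (\<psi> i $ b))"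
    by (simp add: if_distrib[of "\<lambda>x. _ * x"] cong: if_cong)
  finally show ?thesis .
qed

lemma proj_complement_mult_psi:
  assumes a: "a < d" and j: "j < k"
  shows "(\<Sum>c<d. proj_complement $$ (a, c) * \<psi> j $ c) = 0"
proof -
  have "(\<Sum>c<d. proj_complement $$ (a, c) * \<psi> j $ c) =
      (\<Sum>c<d. (if a = c then \<psi> j $ c else 0) - (\<Sum>i<k. \<psi> i $ a * (cnj (\<psi> i $ c) * \<psi> j $ c)))"
    by (intro sum.cong refl) (simp add: proj_complement_index a left_diff_distrib right_diff_distrib
        sum_distrib_right sum_distrib_left mult_ac)
  also have "\<dots> = (\<Sum>c<d. if a = c then \<psi> j $ c else 0) - (\<Sum>c<d. \<Sum>i<k. \<psi> i $ a * (cnj (\<psi> i $ c) * \<psi> j $ c))"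
    by (simp only: sum_subtractf)
  also have "(\<Sum>c<d. \<Sum>i<k. \<psi> i $ a * (cnj (\<psi> i $ c) * \<psi> j $ c)) = (\<Sum>i<k. \<psi> i $ a * (if i = j then 1 else 0))"
    by (subst sum.swap) (simp add: sum_distrib_left[symmetric] orthonormal j)
  finally show ?thesis using a j by (simp add: if_distrib[of "\<lambda>x. _ * x"] cong: if_cong)
qed

lemma proj_complement_idem:
  assumes c: "c < d" and c': "c' < d"
  shows "(\<Sum>a<d. cnj (proj_complement $$ (a, c)) * proj_complement $$ (a, c')) = proj_complement $$ (c, c')"
proof -
  define S where "S x y = (\<Sum>i<k. \<psi> i $ x * cnj (\<psi> i $ y))" for x y
  have Q: "proj_complement $$ (x, y) = (if x = y then 1 else 0) - S x y" if "x < d" "y < d" for x y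
    unfolding S_def using that by (simp add: proj_complement_index)
  have "(\<Sum>a<d. cnj (proj_complement $$ (a, c)) * proj_complement $$ (a, c')) =
      (\<Sum>a<d. ((if c = a then 1 else 0) - S c a) * ((if a = c' then 1 else 0) - S a c'))"
    using c c' by (intro sum.cong refl) (auto simp: Q S_def cnj_sum mult.commute)
  also have "\<dots> = (\<Sum>a<d. (if a = c then (if a = c' then 1 else 0) else 0)) - (\<Sum>a<d. if a = c then S a c' else 0)
      - (\<Sum>a<d. if a = c' then S c a else 0) + (\<Sum>a<d. S c a * S a c')"
    unfolding sum.distrib[symmetric] sum_subtractf[symmetric] by (intro sum.cong refl) (simp add: algebra_simps)
  also have "\<dots> = (if c = c' then 1 else 0) - S c c'"
    using c c' span_proj_square[OF c c'] unfolding S_def by simp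
  finally show ?thesis using Q[OF c c'] by simp
qed

text \<open>The channel measures in the basis \<open>\<psi>\<^sub>j\<close> and prepares \<open>|j\<rangle>\<^sub>B \<otimes> |0\<rangle>\<close>, that is,
  the basis vector with index \<open>j * d\<close>; the component orthogonal to all \<open>\<psi>\<^sub>j\<close> is sent to index \<open>0\<close>.\<close>

definition measure_kraus :: "nat \<Rightarrow> complex mat" where
  "measure_kraus j = mat (k * d) d (\<lambda>(r, c). if r = j * d then cnj (\<psi> j $ c) else 0)"

definition discard_kraus :: "nat \<Rightarrow> complex mat" where
  "discard_kraus a = mat (k * d) d (\<lambda>(r, c). if r = 0 then proj_complement $$ (a, c) else 0)"

definition measure_prepare :: "complex mat list" where
  "measure_prepare = map measure_kraus [0..<k] @ map discard_kraus [0..<d]"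

lemma measure_prepare_carrier: "\<forall>K\<in>set measure_prepare. K \<in> carrier_mat (k * d) d"
  unfolding measure_prepare_def measure_kraus_def discard_kraus_def by auto

lemma sum_list_measure_prepare:
  "(\<Sum>K\<leftarrow>measure_prepare. g K) = (\<Sum>j<k. g (measure_kraus j)) + (\<Sum>a<d. g (discard_kraus a))"
  unfolding measure_prepare_def by (simp add: interv_sum_list_conv_sum_set_nat atLeast0LessThan comp_def)

lemma kraus_channel_measure_prepare: "kraus_channel d (k * d) measure_prepare"
proof -
  have "foldr (\<lambda>K acc. mat_adjoint K * K + acc) measure_prepare (0\<^sub>m d d) = 1\<^sub>m d"
  proof (rule eq_matI)
    fix c c' assume "c < dim_row (1\<^sub>m d :: complex mat)" "c' < dim_col (1\<^sub>m d :: complex mat)"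
    hence c: "c < d" and c': "c' < d" by auto
    have "(\<Sum>r<k * d. cnj (measure_kraus j $$ (r, c)) * measure_kraus j $$ (r, c')) = \<psi> j $ c * cnj (\<psi> j $ c')"
      if j: "j < k" for j
    proof -
      have "(\<Sum>r<k * d. cnj (measure_kraus j $$ (r, c)) * measure_kraus j $$ (r, c')) =
          (\<Sum>r<k * d. if r = j * d then \<psi> j $ c * cnj (\<psi> j $ c') else 0)"
        using c c' by (intro sum.cong refl) (auto simp: measure_kraus_def)
      thus ?thesis using block_index_less[OF j d_pos] by simp
    qed
    moreover have "(\<Sum>r<k * d. cnj (discard_kraus a $$ (r, c)) * discard_kraus a $$ (r, c')) =
        cnj (proj_complement $$ (a, c)) * proj_complement $$ (a, c')" for a
    proof -
      have "(\<Sum>r<k * d. cnj (discard_kraus a $$ (r, c)) * discard_kraus a $$ (r, c')) =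
          (\<Sum>r<k * d. if r = 0 then cnj (proj_complement $$ (a, c)) * proj_complement $$ (a, c') else 0)"
        using c c' by (intro sum.cong refl) (auto simp: discard_kraus_def)
      thus ?thesis using block_index_less[OF _ d_pos, of 0 k] k_pos by simp
    qed
    ultimately have "(\<Sum>K\<leftarrow>measure_prepare. \<Sum>r<k * d. cnj (K $$ (r, c)) * K $$ (r, c')) =
        (\<Sum>j<k. \<psi> j $ c * cnj (\<psi> j $ c')) + proj_complement $$ (c, c')"
      unfolding sum_list_measure_prepare proj_complement_idem[OF c c', symmetric] by simp
    also have "\<dots> = 1\<^sub>m d $$ (c, c')" using c c' by (simp add: proj_complement_index)
    finally show "foldr (\<lambda>K acc. mat_adjoint K * K + acc) measure_prepare (0\<^sub>m d d) $$ (c, c') = 1\<^sub>m d $$ (c, c')"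
      unfolding kraus_sum_index[OF measure_prepare_carrier c c'] .
  qed (use kraus_sum_carrier[OF measure_prepare_carrier] in auto)
  thus ?thesis unfolding kraus_channel_def using measure_prepare_carrier by blast
qed

lemma MIO_measure_prepare: "MIO d (k * d) measure_prepare"
  by (rule MIO_if_single_row_kraus[OF kraus_channel_measure_prepare])
    (auto simp: measure_prepare_def measure_kraus_def discard_kraus_def)

lemma measure_prepare_diag:
  assumes j: "j < k" and r: "r < k * d"
  shows "apply_channel (k * d) measure_prepare (proj (\<psi> j)) $$ (r, r) = (if r = j * d then 1 else 0)"
proof -
  have row: "(\<Sum>c<d. \<Sum>c'<d. K $$ (r, c) * proj (\<psi> j) $$ (c, c') * cnj (K $$ (r, c'))) =
      (\<Sum>c<d. K $$ (r, c) * \<psi> j $ c) * cnj (\<Sum>c<d. K $$ (r, c) * \<psi> j $ c)" for K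
    unfolding cnj_sum sum_product using proj_index[OF j] by (intro sum.cong refl) (simp add: mult_ac)
  have "apply_channel (k * d) measure_prepare (proj (\<psi> j)) $$ (r, r) =
      (\<Sum>K\<leftarrow>measure_prepare. (\<Sum>c<d. K $$ (r, c) * \<psi> j $ c) * cnj (\<Sum>c<d. K $$ (r, c) * \<psi> j $ c))"
    unfolding apply_channel_index[OF measure_prepare_carrier proj_carrier[OF j] r r] row ..
  also have "\<dots> = (\<Sum>i<k. if r = i * d \<and> i = j then 1 else 0) + (\<Sum>a<d. 0)"
    unfolding sum_list_measure_prepare
  proof (intro arg_cong2[where f = "(+)"] sum.cong refl)
    fix i assume "i \<in> {..<k}"
    hence "(\<Sum>c<d. measure_kraus i $$ (r, c) * \<psi> j $ c) = (if r = i * d then (if i = j then 1 else 0) else 0)"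
      using r orthonormal[OF _ j] by (simp add: measure_kraus_def)
    thus "(\<Sum>c<d. measure_kraus i $$ (r, c) * \<psi> j $ c) * cnj (\<Sum>c<d. measure_kraus i $$ (r, c) * \<psi> j $ c)
        = (if r = i * d \<and> i = j then 1 else 0)" by simp
  next
    fix a assume "a \<in> {..<d}"
    hence "(\<Sum>c<d. discard_kraus a $$ (r, c) * \<psi> j $ c) = 0"
      using r proj_complement_mult_psi[OF _ j] by (cases "r = 0") (simp_all add: discard_kraus_def)
    thus "(\<Sum>c<d. discard_kraus a $$ (r, c) * \<psi> j $ c) * cnj (\<Sum>c<d. discard_kraus a $$ (r, c) * \<psi> j $ c) = 0"
      by simp
  qed
  also have "(\<Sum>i<k. if r = i * d \<and> i = j then 1 else (0::complex)) = (\<Sum>i<k. if i = j then (if r = j * d then 1 else 0) else 0)"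
    by (intro sum.cong refl) auto
  finally show ?thesis using j by simp
qed

lemma perfectly_discriminating_measure_prepare: "perfectly_discriminating measure_prepare"
proof -
  have "block_weight d j (apply_channel (k * d) measure_prepare (proj (\<psi> j))) = 1" if j: "j < k" for j
  proof -
    have "block_weight d j (apply_channel (k * d) measure_prepare (proj (\<psi> j))) = (\<Sum>a<d. if a = 0 then 1 else 0)"
      unfolding block_weight_def using measure_prepare_diag[OF j block_index_less[OF j]]
      by (intro sum.cong refl) auto
    thus ?thesis using d_pos by simp
  qed
  thus ?thesis unfolding perfectly_discriminating_def using k_pos by simp
qed

lemma C_MIO_le: "C_MIO d k (\<lambda>_. 1 / real k) (\<lambda>j. proj (\<psi> j)) \<le> log 2 (real d) - log 2 (real k)"
proof -
  define S where "S = {(\<Sum>j<k. 1 / real k * robustness d (ptrace_B k d (apply_channel (k * d) Ks (proj (\<psi> j)))))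
      | Ks. MIO d (k * d) Ks \<and>
            (\<Sum>j<k. 1 / real k * Re (block_weight d j (apply_channel (k * d) Ks (proj (\<psi> j)))))
              = P_suc d k (\<lambda>_. 1 / real k) (\<lambda>j. proj (\<psi> j))}"
  have bounds: "0 \<le> x \<and> x \<le> real d / real k - 1" if "x \<in> S" for x
    using that average_robustness_le unfolding S_def P_suc_eq_1 perfectly_discriminating_def by blast
  have witness: "(\<Sum>j<k. 1 / real k * robustness d (ptrace_B k d (apply_channel (k * d) measure_prepare (proj (\<psi> j))))) \<in> S"
    unfolding S_def P_suc_eq_1
    using MIO_measure_prepare perfectly_discriminating_measure_prepare[unfolded perfectly_discriminating_def]
    by blast
  have "0 \<le> Sup S"
    using cSup_upper[OF witness] bounds[OF witness] bounds by (meson bdd_above_def order_trans)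
  moreover have "Sup S \<le> real d / real k - 1"
    using bounds witness by (intro cSup_least) auto
  ultimately have "log 2 (1 + Sup S) \<le> log 2 (real d / real k)"
    using k_pos d_pos by (subst log_le_cancel_iff) auto
  thus ?thesis unfolding C_MIO_def S_def[symmetric] using k_pos d_pos by (simp add: log_divide)
qed

definition avg_state :: "complex mat" where
  "avg_state = mat d d (\<lambda>(a, b). \<Sum>j<k. complex_of_real (1 / real k) * proj (\<psi> j) $$ (a, b))"

lemma avg_state_carrier: "avg_state \<in> carrier_mat d d"
  unfolding avg_state_def by simp

lemma avg_state_index:
  "a < d \<Longrightarrow> b < d \<Longrightarrow> avg_state $$ (a, b) = complex_of_real (1 / real k) * (\<Sum>j<k. \<psi> j $ a * cnj (\<psi> j $ b))"
  unfolding avg_state_def using proj_index by (simp add: sum_distrib_left)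

lemma avg_state_square: "avg_state * avg_state = complex_of_real (1 / real k) \<cdot>\<^sub>m avg_state"
proof (rule eq_matI)
  fix a b assume "a < dim_row (complex_of_real (1 / real k) \<cdot>\<^sub>m avg_state)"
    "b < dim_col (complex_of_real (1 / real k) \<cdot>\<^sub>m avg_state)"
  hence ab: "a < d" "b < d" using avg_state_carrier by auto
  have "(avg_state * avg_state) $$ (a, b) = (\<Sum>c<d. avg_state $$ (a, c) * avg_state $$ (c, b))"
    using ab avg_state_carrier by (simp add: scalar_prod_def row_def col_def atLeast0LessThan)
  also have "\<dots> = complex_of_real (1 / real k) * complex_of_real (1 / real k) *
      (\<Sum>c<d. (\<Sum>i<k. \<psi> i $ a * cnj (\<psi> i $ c)) * (\<Sum>j<k. \<psi> j $ c * cnj (\<psi> j $ b)))"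
    using ab by (simp add: avg_state_index sum_distrib_left mult_ac)
  also have "\<dots> = (complex_of_real (1 / real k) \<cdot>\<^sub>m avg_state) $$ (a, b)"
    unfolding span_proj_square[OF ab] using ab avg_state_carrier by (simp add: avg_state_index)
  finally show "(avg_state * avg_state) $$ (a, b) = (complex_of_real (1 / real k) \<cdot>\<^sub>m avg_state) $$ (a, b)" .
qed (use avg_state_carrier in auto)

lemma mtrace_avg_state: "mtrace avg_state = 1"
proof -
  have "mtrace avg_state = (\<Sum>a<d. complex_of_real (1 / real k) * (\<Sum>j<k. \<psi> j $ a * cnj (\<psi> j $ a)))"
    unfolding mtrace_eq_sum[OF avg_state_carrier] by (intro sum.cong refl) (simp add: avg_state_index)
  also have "\<dots> = complex_of_real (1 / real k) * (\<Sum>j<k. \<Sum>a<d. cnj (\<psi> j $ a) * \<psi> j $ a)"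
    unfolding sum_distrib_left[symmetric] by (subst sum.swap) (simp add: mult.commute)
  also have "\<dots> = 1" using orthonormal k_pos by simp
  finally show ?thesis .
qed

lemma distinguishability_eq_log: "distinguishability d k (\<lambda>_. 1 / real k) \<psi> = log 2 (real k)"
proof -
  have "distinguishability d k (\<lambda>_. 1 / real k) \<psi> = - log 2 (1 / real k)"
    unfolding distinguishability_def avg_state_def[symmetric]
    using vn_entropy_scaled_projection[OF avg_state_carrier avg_state_square _ mtrace_avg_state] k_pos by simp
  thus ?thesis using k_pos by (simp add: log_divide)
qed

end

theorem theorem1:
  fixes d k :: nat and \<psi> :: "nat \<Rightarrow> complex vec"
  assumes "k \<ge> 1"
    and "\<And>j. j < k \<Longrightarrow> \<psi> j \<in> carrier_vec d"
    and "\<And>j. j < k \<Longrightarrow> conjugate (\<psi> j) \<bullet> \<psi> j = 1"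
    and "\<And>i j. i < k \<Longrightarrow> j < k \<Longrightarrow> i \<noteq> j \<Longrightarrow> conjugate (\<psi> i) \<bullet> \<psi> j = 0"
  shows "C_MIO d k (\<lambda>_. 1 / real k) (\<lambda>j. proj (\<psi> j))
         + distinguishability d k (\<lambda>_. 1 / real k) \<psi> \<le> log 2 (real d)"
proof -
  interpret orthonormal_family d k \<psi> using assms by unfold_locales
  show ?thesis using C_MIO_le distinguishability_eq_log by simp
qed

end
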